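(* Assume $f_1$ is $C^3$ and $f_2$ is $C^2$, that $\frac{D}{\gamma_2\lambda_Z(D)}>f_2'(\lambda_Z(D))$, and let $\mu_{c_2}>\mu_{c_1}(D,D)$ be a zero of $A$. Then there exist $\delta>0$ and $\rho>0$ such that for every $(D_1,D_2)$ with $D_1,D_2>0$ and $\|(D_1,D_2)-(D,D)\|<\rho$ the following hold for all $\mu\in[\mu_{c_2}-\delta,\mu_{c_2}+\delta]$ (all of which satisfy $\mu>\mu_{c_1}(D_1,D_2)$): (1) the Jacobian of $( * )$ at $E_2(\mu,D_1,D_2)$ has one negative real eigenvalue and a pair of nonreal complex conjugate eigenvalues $a(\mu)\pm i\omega(\mu)$, $\omega(\mu)\ne0$; (2) if, in addition, $f_1''(N(\mu_{c_2},D,D))<0$, then (after possibly shrinking $\delta$ and $\rho$) $a(\mu)$ is differentiable in $\mu$, $a'(\mu)>0$ on $[\mu_{c_2}-\delta,\mu_{c_2}+\delta]$, and there is $\mu^*=\mu^*(D_1,D_2)\in(\mu_{c_2}-\delta,\mu_{c_2}+\delta)$ with $a(\mu^* )=0$; in particular at $\mu^*$ the Jacobian has a pair of nonzero purely imaginary eigenvalues crossing the imaginary axis with $a'(\mu^* )>0$, while its third eigenvalue is negative.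
   Context: Let $D,\gamma_1,\gamma_2>0$ and $f_1,f_2:[0,\infty)\to[0,\infty)$ bounded, continuously differentiable, $f_i(0)=0$, $f_i'>0$, with $\lim f_1>d/\gamma_1$, $\lim f_2>d/\gamma_2$ for all $d$ in a neighborhood of $D$. The system $( * )$ is $N'=(\mu-N)D-Pf_1(N)$, $P'=\gamma_1Pf_1(N)-D_1P-Zf_2(P)$, $Z'=\gamma_2Zf_2(P)-D_2Z$ with $D_1,D_2>0$ and parameter $\mu>0$. $\lambda_P(d),\lambda_Z(d)$ are defined by $f_1(\lambda_P(d))=d/\gamma_1$, $f_2(\lambda_Z(d))=d/\gamma_2$; $\mu_{c_1}(D_1,D_2)=\lambda_P(D_1)+D_1\lambda_Z(D_2)/(D\gamma_1)$. For $\mu>\mu_{c_1}(D_1,D_2)$, $N(\mu,D_1,D_2)$ is the unique $N\in(0,\mu)$ with $(\mu-N)D-\lambda_Z(D_2)f_1(N)=0$, $Z(\mu,D_1,D_2)=(\gamma_2/D_2)\lambda_Z(D_2)(\gamma_1f_1(N)-D_1)$, and $E_2(\mu,D_1,D_2)=(N,\lambda_Z(D_2),Z)$ is the coexistence equilibrium. For $\mu>\mu_{c_1}(D,D)$, $A(\mu)=Z(\mu,D,D)\bigl(\frac{D}{\gamma_2\lambda_Z(D)}-f_2'(\lambda_Z(D))\bigr)-\lambda_Z(D)f_1'(N(\mu,D,D))$ (twice the real part of the complex eigenvalue pair of the Jacobian at $E_2(\mu,D,D)$). *)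

theory Defs
  imports "HOL-Analysis.Analysis"
begin

definition lvl :: "(real \<Rightarrow> real) \<Rightarrow> real \<Rightarrow> real" where
  "lvl f c = (THE x. 0 \<le> x \<and> f x = c)"

definition lamP :: "(real \<Rightarrow> real) \<Rightarrow> real \<Rightarrow> real \<Rightarrow> real" where
  "lamP f1 g1 d = lvl f1 (d / g1)"

definition lamZ :: "(real \<Rightarrow> real) \<Rightarrow> real \<Rightarrow> real \<Rightarrow> real" where
  "lamZ f2 g2 d = lvl f2 (d / g2)"

definition muc1 ::
  "(real \<Rightarrow> real) \<Rightarrow> (real \<Rightarrow> real) \<Rightarrow> real \<Rightarrow> real \<Rightarrow> real \<Rightarrow> real \<Rightarrow> real \<Rightarrow> real" where
  "muc1 f1 f2 D g1 g2 D1 D2 = lamP f1 g1 D1 + D1 * lamZ f2 g2 D2 / (D * g1)"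

definition Neq ::
  "(real \<Rightarrow> real) \<Rightarrow> (real \<Rightarrow> real) \<Rightarrow> real \<Rightarrow> real \<Rightarrow> real \<Rightarrow> real \<Rightarrow> real \<Rightarrow> real \<Rightarrow> real" where
  "Neq f1 f2 D g1 g2 mu D1 D2 =
     (THE N. 0 < N \<and> N < mu \<and> (mu - N) * D - lamZ f2 g2 D2 * f1 N = 0)"

definition Zeq ::
  "(real \<Rightarrow> real) \<Rightarrow> (real \<Rightarrow> real) \<Rightarrow> real \<Rightarrow> real \<Rightarrow> real \<Rightarrow> real \<Rightarrow> real \<Rightarrow> real \<Rightarrow> real" where
  "Zeq f1 f2 D g1 g2 mu D1 D2 =
     (g2 / D2) * lamZ f2 g2 D2 * (g1 * f1 (Neq f1 f2 D g1 g2 mu D1 D2) - D1)"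

definition E2 ::
  "(real \<Rightarrow> real) \<Rightarrow> (real \<Rightarrow> real) \<Rightarrow> real \<Rightarrow> real \<Rightarrow> real \<Rightarrow> real \<Rightarrow> real \<Rightarrow> real
     \<Rightarrow> real \<times> real \<times> real" where
  "E2 f1 f2 D g1 g2 mu D1 D2 =
     (Neq f1 f2 D g1 g2 mu D1 D2, lamZ f2 g2 D2, Zeq f1 f2 D g1 g2 mu D1 D2)"

text \<open>Jacobian matrix of the system (*) at the point (N,P,Z), where f1', f2'
  are the derivatives of f1, f2 (passed explicitly as df1, df2).
  Rows/columns ordered N, P, Z.\<close>
definition jac ::
  "(real \<Rightarrow> real) \<Rightarrow> (real \<Rightarrow> real) \<Rightarrow> (real \<Rightarrow> real) \<Rightarrow> (real \<Rightarrow> real)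
   \<Rightarrow> real \<Rightarrow> real \<Rightarrow> real \<Rightarrow> real \<Rightarrow> real \<Rightarrow> real \<times> real \<times> real \<Rightarrow> real^3^3" where
  "jac f1 f2 df1 df2 D g1 g2 D1 D2 X =
     (case X of (N, P, Z) \<Rightarrow>
       vector [
         vector [- D - P * df1 N, - f1 N, 0],
         vector [g1 * P * df1 N, g1 * f1 N - D1 - Z * df2 P, - f2 P],
         vector [0, g2 * Z * df2 P, g2 * f2 P - D2]])"

definition eigenvalues :: "real^'n^'n \<Rightarrow> complex set" where
  "eigenvalues M = {l. \<exists>v :: complex^'n. v \<noteq> 0 \<and>
      (\<chi> i j. complex_of_real (M $ i $ j)) *v v = l *s v}"

definition Afun ::
  "(real \<Rightarrow> real) \<Rightarrow> (real \<Rightarrow> real) \<Rightarrow> (real \<Rightarrow> real) \<Rightarrow> (real \<Rightarrow> real)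
   \<Rightarrow> real \<Rightarrow> real \<Rightarrow> real \<Rightarrow> real \<Rightarrow> real" where
  "Afun f1 f2 df1 df2 D g1 g2 mu =
     Zeq f1 f2 D g1 g2 mu D D * (D / (g2 * lamZ f2 g2 D) - df2 (lamZ f2 g2 D))
     - lamZ f2 g2 D * df1 (Neq f1 f2 D g1 g2 mu D D)"

end

theory Submission
  imports Defs
begin

text \<open>At \<open>D1 = D2 = D\<close> the total mass \<open>N + P/\<gamma>1 + Z/(\<gamma>1 \<gamma>2)\<close> obeys \<open>x' = D (\<mu> - x)\<close>,
  so \<open>-D\<close> is an eigenvalue of the Jacobian at \<open>E2\<close> for every \<open>\<mu>\<close>. The Jacobian is tridiagonal
  with characteristic polynomial \<open>\<lambda>\<^sup>3 + c2 \<lambda>\<^sup>2 + c1 \<lambda> + c0\<close>, and at \<open>(\<mu>, D, D)\<close> the condition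
  \<open>A(\<mu>) = 0\<close> reads \<open>c2 = D\<close>; hence at \<open>\<mu>c2\<close> it factors as \<open>(\<lambda> + D)(\<lambda>\<^sup>2 + c1)\<close> with \<open>c1 > 0\<close>, a negative discriminant
  and a purely imaginary pair. A negative discriminant persists near \<open>(\<mu>c2, D, D)\<close>, and there the
  real root \<open>r\<close> of a cubic, and with it the real part \<open>a = -(c2 + r)/2\<close> of the complex pair,
  depends continuously on the coefficients and is differentiable in \<open>\<mu>\<close> by implicit
  differentiation. At \<open>(\<mu>c2, D, D)\<close> one has \<open>a = 0\<close> and, when \<open>f1''(N) < 0\<close>, \<open>a' > 0\<close>; by
  continuity \<open>a' > c > 0\<close> on a box around it while \<open>a(\<mu>c2)\<close> is small, so \<open>a\<close> crosses zero.\<close>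

lemma tendsto_The:
  fixes x0 :: real
  assumes unique: "eventually (\<lambda>y. \<forall>x x'. P y x \<longrightarrow> P y x' \<longrightarrow> x = x') F"
    and close: "\<And>e. 0 < e \<Longrightarrow> eventually (\<lambda>y. \<exists>x. \<bar>x - x0\<bar> < e \<and> P y x) F"
  shows "((\<lambda>y. THE x. P y x) \<longlongrightarrow> x0) F"
proof (rule tendstoI)
  fix e :: real assume "0 < e"
  from eventually_conj[OF unique close[OF this]]
  show "eventually (\<lambda>y. dist (THE x. P y x) x0 < e) F"
  proof (rule eventually_mono)
    fix y assume h: "(\<forall>x x'. P y x \<longrightarrow> P y x' \<longrightarrow> x = x') \<and> (\<exists>x. \<bar>x - x0\<bar> < e \<and> P y x)"
    then obtain x where x: "\<bar>x - x0\<bar> < e" "P y x" by blast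
    have "(THE x. P y x) = x" using h x by (intro the_equality) auto
    thus "dist (THE x. P y x) x0 < e" using x by (simp add: dist_real_def)
  qed
qed

lemma eventually_nhds_pair_box:
  fixes x0 :: real and y0 :: "'a::metric_space"
  assumes "eventually P (nhds (x0, y0))"
  obtains e where "0 < e" "\<And>x y. \<bar>x - x0\<bar> \<le> e \<Longrightarrow> dist y y0 < e \<Longrightarrow> P (x, y)"
proof -
  obtain e where e: "0 < e" "\<And>z. dist z (x0, y0) < e \<Longrightarrow> P z"
    using assms unfolding eventually_nhds_metric by blast
  have "P (x, y)" if "\<bar>x - x0\<bar> \<le> e/3" "dist y y0 < e/3" for x y
  proof (rule e(2))
    have "dist (x, y) (x0, y0) \<le> dist x x0 + dist y y0"
      unfolding dist_Pair_Pair by (rule sqrt_sum_squares_le_sum) auto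
    also have "\<dots> < e" using that e(1) by (simp add: dist_real_def)
    finally show "dist (x, y) (x0, y0) < e" .
  qed
  thus thesis using e(1) by (intro that[of "e/3"]) auto
qed

lemma zero_crossing_of_uniformly_increasing:
  fixes a a' :: "real \<Rightarrow> real"
  assumes "0 < \<delta>" and small: "\<bar>a x0\<bar> < c * \<delta>"
    and deriv: "\<And>x. x \<in> {x0 - \<delta>..x0 + \<delta>} \<Longrightarrow> (a has_real_derivative a' x) (at x)"
    and fast: "\<And>x. x \<in> {x0 - \<delta>..x0 + \<delta>} \<Longrightarrow> c < a' x"
  shows "\<exists>x\<in>{x0 - \<delta><..<x0 + \<delta>}. a x = 0"
proof -
  have increasing: "a y - c * y < a z - c * z" if "x0 - \<delta> \<le> y" "y < z" "z \<le> x0 + \<delta>" for y z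
  proof (rule DERIV_pos_imp_increasing[OF that(2)])
    fix x assume "y \<le> x" "x \<le> z"
    hence "x \<in> {x0 - \<delta>..x0 + \<delta>}" using that by auto
    thus "\<exists>d. DERIV (\<lambda>x. a x - c * x) x :> d \<and> 0 < d"
      using deriv fast by (intro exI[of _ "a' x - c"]) (auto intro!: derivative_eq_intros)
  qed
  have "a (x0 - \<delta>) < 0" "0 < a (x0 + \<delta>)"
    using increasing[of "x0 - \<delta>" x0] increasing[of x0 "x0 + \<delta>"] \<open>0 < \<delta>\<close> small
    by (simp_all add: algebra_simps abs_less_iff)
  moreover have "continuous_on {x0 - \<delta>..x0 + \<delta>} a"
    using deriv by (intro DERIV_atLeastAtMost_imp_continuous_on) auto
  ultimately obtain x where "x0 - \<delta> \<le> x" "x \<le> x0 + \<delta>" "a x = 0"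
    using IVT'[of a "x0 - \<delta>" 0 "x0 + \<delta>"] \<open>0 < \<delta>\<close> by auto
  moreover have "x \<noteq> x0 - \<delta>" "x \<noteq> x0 + \<delta>" using calculation \<open>a (x0 - \<delta>) < 0\<close> \<open>0 < a (x0 + \<delta>)\<close> by auto
  ultimately show ?thesis by auto
qed

section \<open>Real cubics with negative discriminant\<close>

definition cubic :: "real \<Rightarrow> real \<Rightarrow> real \<Rightarrow> real \<Rightarrow> real" where
  "cubic a b c x = x^3 + a*x^2 + b*x + c"

definition cubic_disc :: "real \<Rightarrow> real \<Rightarrow> real \<Rightarrow> real" where
  "cubic_disc a b c = a^2*b^2 - 4*b^3 - 4*a^3*c - 27*c^2 + 18*a*b*c"

definition cubic_real_root :: "real \<Rightarrow> real \<Rightarrow> real \<Rightarrow> real" where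
  "cubic_real_root a b c = (THE r. cubic a b c r = 0)"

lemma continuous_on_cubic: "continuous_on S (cubic a b c)"
  unfolding cubic_def by (intro continuous_intros)

lemma cubic_lower_terms_bound:
  fixes a b c x :: real
  assumes "1 + \<bar>a\<bar> + \<bar>b\<bar> + \<bar>c\<bar> \<le> \<bar>x\<bar>"
  shows "\<bar>a*x^2 + b*x + c\<bar> < \<bar>x\<bar>^3"
proof -
  have x1: "1 \<le> \<bar>x\<bar>" using assms by linarith
  have "\<bar>x\<bar> * 1 \<le> \<bar>x\<bar> * \<bar>x\<bar>" using x1 by (intro mult_left_mono) auto
  hence xx: "\<bar>x\<bar> \<le> x^2" "1 \<le> x^2" using x1 by (auto simp: power2_eq_square abs_mult_self_eq)
  have "\<bar>a*x^2 + b*x + c\<bar> \<le> \<bar>a\<bar>*x^2 + \<bar>b\<bar>*\<bar>x\<bar> + \<bar>c\<bar>"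
    by (rule order_trans[OF abs_triangle_ineq])
       (auto simp: abs_mult intro!: add_mono order_trans[OF abs_triangle_ineq])
  also have "\<dots> \<le> (\<bar>a\<bar> + \<bar>b\<bar> + \<bar>c\<bar>) * x^2"
  proof -
    have "\<bar>b\<bar>*\<bar>x\<bar> \<le> \<bar>b\<bar>*x^2" "\<bar>c\<bar>*1 \<le> \<bar>c\<bar>*x^2"
      using xx by (intro mult_left_mono; simp)+
    thus ?thesis by (simp add: distrib_right)
  qed
  also have "\<dots> < \<bar>x\<bar> * x^2"
    using assms xx by (intro mult_strict_right_mono) auto
  also have "\<dots> = \<bar>x\<bar>^3" by (simp add: power2_eq_square power3_eq_cube abs_mult_self_eq)
  finally show ?thesis .
qed

lemma cubic_has_root: "\<exists>r. cubic a b c r = 0"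
proof -
  define M where "M = 1 + \<bar>a\<bar> + \<bar>b\<bar> + \<bar>c\<bar>"
  have M: "1 \<le> M" "\<bar>M\<bar> = M" "\<bar>-M\<bar> = M" unfolding M_def by auto
  have "1 + \<bar>a\<bar> + \<bar>b\<bar> + \<bar>c\<bar> \<le> \<bar>M\<bar>" "1 + \<bar>a\<bar> + \<bar>b\<bar> + \<bar>c\<bar> \<le> \<bar>-M\<bar>"
    unfolding M(2,3) M_def by simp_all
  from cubic_lower_terms_bound[OF this(1)] cubic_lower_terms_bound[OF this(2)]
  have "\<bar>a*M^2 + b*M + c\<bar> < M^3" "\<bar>a*(-M)^2 + b*(-M) + c\<bar> < M^3"
    unfolding M(2,3) .
  moreover have "cubic a b c M = M^3 + (a*M^2 + b*M + c)"
    "cubic a b c (-M) = -(M^3) + (a*(-M)^2 + b*(-M) + c)"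
    unfolding cubic_def by simp_all
  ultimately have "cubic a b c (-M) \<le> 0" "0 \<le> cubic a b c M"
    by (simp_all only: abs_less_iff) linarith+
  with M(1) show ?thesis
    using IVT'[of "cubic a b c" "-M" 0 M] continuous_on_cubic by force
qed

lemma cubic_factor:
  assumes "cubic a b c r = 0"
  shows "cubic a b c x = (x - r) * (x^2 + (a + r)*x + (b + r*(a + r)))"
proof -
  have "c = -(r^3 + a*r^2 + b*r)" using assms unfolding cubic_def by simp
  thus ?thesis unfolding cubic_def by (simp add: power2_eq_square power3_eq_cube algebra_simps)
qed

lemma cubic_disc_via_root:
  assumes "cubic a b c r = 0"
  shows "cubic_disc a b c
    = ((a + r)^2 - 4*(b + r*(a + r))) * (r^2 + (a + r)*r + (b + r*(a + r)))^2"
proof -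
  have "c = -(r^3 + a*r^2 + b*r)" using assms unfolding cubic_def by simp
  thus ?thesis unfolding cubic_disc_def by algebra
qed

lemma quadratic_pos:
  fixes s t x :: real
  assumes "s^2 < 4*t"
  shows "0 < x^2 + s*x + t"
proof -
  have "x^2 + s*x + t = (x + s/2)^2 + (t - s^2/4)" by (simp add: power2_eq_square algebra_simps)
  moreover have "t - s^2/4 > 0" using assms by simp
  ultimately show ?thesis by (metis add_nonneg_pos zero_le_power2)
qed

lemma cubic_cofactor_disc_neg:
  assumes "cubic a b c r = 0" "cubic_disc a b c < 0"
  shows "(a + r)^2 < 4*(b + r*(a + r))"
proof -
  have "((a + r)^2 - 4*(b + r*(a + r))) * (r^2 + (a + r)*r + (b + r*(a + r)))^2 < 0"
    using assms cubic_disc_via_root by metis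
  hence "(a + r)^2 - 4*(b + r*(a + r)) < 0"
    by (metis mult_nonneg_nonneg not_less zero_le_power2)
  thus ?thesis by simp
qed

lemma cubic_sign:
  assumes "cubic a b c r = 0" "cubic_disc a b c < 0"
  shows "x < r \<Longrightarrow> cubic a b c x < 0" "r < x \<Longrightarrow> 0 < cubic a b c x"
    "cubic a b c x = 0 \<longleftrightarrow> x = r"
proof -
  have "0 < x^2 + (a + r)*x + (b + r*(a + r))"
    using quadratic_pos[OF cubic_cofactor_disc_neg[OF assms]] .
  thus "x < r \<Longrightarrow> cubic a b c x < 0" "r < x \<Longrightarrow> 0 < cubic a b c x"
    "cubic a b c x = 0 \<longleftrightarrow> x = r"
    unfolding cubic_factor[OF assms(1)] by (auto simp: mult_pos_pos mult_neg_pos)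
qed

lemma cubic_real_root_eq:
  assumes "cubic a b c r = 0" "cubic_disc a b c < 0"
  shows "cubic_real_root a b c = r"
  unfolding cubic_real_root_def using cubic_sign(3)[OF assms] by auto

lemma cubic_real_root:
  assumes "cubic_disc a b c < 0"
  shows "cubic a b c (cubic_real_root a b c) = 0"
  using cubic_has_root cubic_real_root_eq assms by metis

lemma cubic_deriv_at_real_root_pos:
  assumes "cubic_disc a b c < 0"
  defines "r \<equiv> cubic_real_root a b c"
  shows "0 < 3*r^2 + 2*a*r + b"
proof -
  have "cubic a b c r = 0" unfolding r_def using cubic_real_root[OF assms(1)] .
  from quadratic_pos[OF cubic_cofactor_disc_neg[OF this assms(1)], of r]
  show ?thesis by (simp add: power2_eq_square algebra_simps)
qed

lemma complex_conjugate_pair_product: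
  fixes z :: complex and x y :: real
  shows "(z - Complex x y) * (z - Complex x (-y)) = z^2 - of_real (2*x) * z + of_real (x^2 + y^2)"
  by (simp add: complex_eq_iff power2_eq_square algebra_simps)

text \<open>Since the roots multiply to \<open>-c\<close> and the complex pair contributes a positive factor,
  \<open>0 < c\<close> forces the real root to be negative.\<close>

lemma cubic_complex_roots:
  assumes disc: "cubic_disc a b c < 0" and c: "0 < c"
  defines "r \<equiv> cubic_real_root a b c"
  shows "\<exists>y. r < 0 \<and> y \<noteq> 0 \<and>
    {z::complex. z^3 + of_real a * z^2 + of_real b * z + of_real c = 0}
      = {of_real r, Complex (- (a + r) / 2) y, Complex (- (a + r) / 2) (-y)}"
proof -
  define s where "s = a + r"
  define t where "t = b + r * s"
  define x where "x = - s / 2"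
  define y where "y = sqrt (t - s^2/4)"
  have root: "cubic a b c r = 0" unfolding r_def using cubic_real_root[OF disc] .
  have st: "s^2 < 4*t" using cubic_cofactor_disc_neg[OF root disc] unfolding s_def t_def by simp
  have c_eq: "c = - r * t"
    using root unfolding cubic_def t_def s_def by (simp add: power2_eq_square power3_eq_cube algebra_simps)
  have "0 < t" using st zero_le_power2[of s] by linarith
  moreover have "r * t < 0" using c c_eq by simp
  ultimately have r_neg: "r < 0" by (simp add: mult_less_0_iff)
  have y_pos: "0 < y" unfolding y_def using st by simp
  have "y^2 = t - s^2/4" unfolding y_def using st by simp
  moreover have "x^2 = s^2/4" unfolding x_def by (simp add: power_divide)
  ultimately have xy: "x^2 + y^2 = t" by simp
  have pair: "(z - Complex x y) * (z - Complex x (-y)) = z^2 + of_real s * z + of_real t" for z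
  proof -
    have "complex_of_real (2 * x) = - of_real s" unfolding x_def by simp
    thus ?thesis unfolding complex_conjugate_pair_product xy by simp
  qed
  have factor: "z^3 + of_real a * z^2 + of_real b * z + of_real c
      = (z - of_real r) * ((z - Complex x y) * (z - Complex x (-y)))" for z :: complex
  proof -
    have coeffs: "complex_of_real a = of_real s - of_real r"
      "complex_of_real b = of_real t - of_real r * of_real s" "complex_of_real c = - of_real r * of_real t"
      unfolding s_def t_def c_eq by simp_all
    show ?thesis unfolding pair coeffs by (simp add: power2_eq_square power3_eq_cube algebra_simps)
  qed
  have "{z::complex. z^3 + of_real a * z^2 + of_real b * z + of_real c = 0}
      = {of_real r, Complex x y, Complex x (-y)}"
    unfolding factor mult_eq_0_iff right_minus_eq by blast
  moreover have "x = - (a + r) / 2" unfolding x_def s_def ..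
  moreover have "y \<noteq> 0" using y_pos by simp
  ultimately show ?thesis using r_neg by blast
qed

section \<open>Continuous and differentiable dependence of the real root\<close>

lemma tendsto_cubic_disc:
  assumes "(a \<longlongrightarrow> a0) F" "(b \<longlongrightarrow> b0) F" "(c \<longlongrightarrow> c0) F"
  shows "((\<lambda>y. cubic_disc (a y) (b y) (c y)) \<longlongrightarrow> cubic_disc a0 b0 c0) F"
  unfolding cubic_disc_def by (intro tendsto_intros assms)

lemma tendsto_cubic_real_root:
  assumes lim: "(a \<longlongrightarrow> a0) F" "(b \<longlongrightarrow> b0) F" "(c \<longlongrightarrow> c0) F"
    and disc: "cubic_disc a0 b0 c0 < 0"
  shows "((\<lambda>y. cubic_real_root (a y) (b y) (c y)) \<longlongrightarrow> cubic_real_root a0 b0 c0) F"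
proof -
  define r0 where "r0 = cubic_real_root a0 b0 c0"
  have root: "cubic a0 b0 c0 r0 = 0" unfolding r0_def using cubic_real_root[OF disc] .
  have "((\<lambda>y. THE x. cubic (a y) (b y) (c y) x = 0) \<longlongrightarrow> r0) F"
  proof (rule tendsto_The)
    have "eventually (\<lambda>y. cubic_disc (a y) (b y) (c y) < 0) F"
      using order_tendstoD(2)[OF tendsto_cubic_disc[OF lim] disc] .
    thus "eventually (\<lambda>y. \<forall>x x'. cubic (a y) (b y) (c y) x = 0 \<longrightarrow>
        cubic (a y) (b y) (c y) x' = 0 \<longrightarrow> x = x') F"
      by (rule eventually_mono) (metis cubic_sign(3) cubic_real_root)
  next
    fix e :: real assume e: "0 < e"
    have lim_cubic: "((\<lambda>y. cubic (a y) (b y) (c y) x) \<longlongrightarrow> cubic a0 b0 c0 x) F" for x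
      unfolding cubic_def by (intro tendsto_intros lim)
    have "cubic a0 b0 c0 (r0 - e/2) < 0" "0 < cubic a0 b0 c0 (r0 + e/2)"
      using cubic_sign(1,2)[OF root disc] e by auto
    hence "eventually (\<lambda>y. cubic (a y) (b y) (c y) (r0 - e/2) < 0) F"
      "eventually (\<lambda>y. 0 < cubic (a y) (b y) (c y) (r0 + e/2)) F"
      using order_tendstoD[OF lim_cubic] by blast+
    thus "eventually (\<lambda>y. \<exists>x. \<bar>x - r0\<bar> < e \<and> cubic (a y) (b y) (c y) x = 0) F"
    proof eventually_elim
      case (elim y)
      then obtain x where "r0 - e/2 \<le> x" "x \<le> r0 + e/2" "cubic (a y) (b y) (c y) x = 0"
        using IVT'[OF _ _ _ continuous_on_cubic, of "a y" "b y" "c y" "r0 - e/2" 0 "r0 + e/2"] e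
        by auto
      thus ?case using e by (intro exI[of _ x]) auto
    qed
  qed
  thus ?thesis unfolding cubic_real_root_def r0_def .
qed

lemma cubic_diff:
  "cubic a b c y - cubic a b c x = (y - x) * (y^2 + y*x + x^2 + a*(y + x) + b)"
  unfolding cubic_def by (simp add: power2_eq_square power3_eq_cube algebra_simps)

lemma has_real_derivative_cubic_real_root:
  fixes a b c :: "real \<Rightarrow> real"
  assumes da: "(a has_real_derivative a') (at x)" and db: "(b has_real_derivative b') (at x)"
    and dc: "(c has_real_derivative c') (at x)"
    and disc: "cubic_disc (a x) (b x) (c x) < 0"
  defines "r \<equiv> cubic_real_root (a x) (b x) (c x)"
  shows "((\<lambda>y. cubic_real_root (a y) (b y) (c y)) has_real_derivative
     - (a' * r^2 + b' * r + c') / (3 * r^2 + 2 * a x * r + b x)) (at x)"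
proof -
  define R where "R y = cubic_real_root (a y) (b y) (c y)" for y
  define Q where "Q y = (R y)^2 + R y * r + r^2 + a y * (R y + r) + b y" for y
  define C where "C y = cubic (a y) (b y) (c y) r" for y
  have lim: "(a \<longlongrightarrow> a x) (at x)" "(b \<longlongrightarrow> b x) (at x)" "(c \<longlongrightarrow> c x) (at x)"
    using DERIV_continuous[OF da] DERIV_continuous[OF db] DERIV_continuous[OF dc]
    by (simp_all add: continuous_at)
  have lim_Q: "(Q \<longlongrightarrow> 3 * r^2 + 2 * a x * r + b x) (at x)"
  proof -
    have "(R \<longlongrightarrow> r) (at x)"
      unfolding R_def r_def by (rule tendsto_cubic_real_root[OF lim disc])
    hence "(Q \<longlongrightarrow> r^2 + r * r + r^2 + a x * (r + r) + b x) (at x)"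
      unfolding Q_def by (intro tendsto_intros lim)
    thus ?thesis by (simp add: power2_eq_square algebra_simps)
  qed
  have Q_ne: "3 * r^2 + 2 * a x * r + b x \<noteq> 0"
    using cubic_deriv_at_real_root_pos[OF disc] unfolding r_def by simp
  have "(C has_real_derivative a' * r^2 + b' * r + c') (at x)"
    unfolding C_def cubic_def by (auto intro!: derivative_eq_intros da db dc)
  hence lim_quotient: "((\<lambda>y. - ((C y - C x) / (y - x)) / Q y)
      \<longlongrightarrow> - (a' * r^2 + b' * r + c') / (3 * r^2 + 2 * a x * r + b x)) (at x)"
    unfolding has_field_derivative_iff by (intro tendsto_intros lim_Q Q_ne)
  have "eventually (\<lambda>y. cubic_disc (a y) (b y) (c y) < 0) (at x)"
    using order_tendstoD(2)[OF tendsto_cubic_disc[OF lim] disc] .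
  with tendsto_imp_eventually_ne[OF lim_Q Q_ne]
  have quotient: "eventually (\<lambda>y. (R y - R x) / (y - x) = - ((C y - C x) / (y - x)) / Q y) (at x)"
  proof eventually_elim
    case (elim y)
    have "C x = 0" unfolding C_def r_def using cubic_real_root[OF disc] .
    moreover have "cubic (a y) (b y) (c y) (R y) = 0" unfolding R_def using cubic_real_root elim(2) .
    ultimately have "(R y - r) * Q y = - (C y - C x)"
      using cubic_diff[of "a y" "b y" "c y" "R y" r] unfolding Q_def C_def by simp
    hence "R y - r = - (C y - C x) / Q y" using elim(1) by (simp add: field_simps)
    thus ?case unfolding R_def r_def by (simp add: divide_simps)
  qed
  have "(R has_real_derivative - (a' * r^2 + b' * r + c') / (3 * r^2 + 2 * a x * r + b x)) (at x)"
    unfolding has_field_derivative_iff by (rule iffD2[OF tendsto_cong[OF quotient] lim_quotient])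
  thus ?thesis unfolding R_def .
qed

section \<open>Eigenvalues of a tridiagonal 3\<times>3 matrix with vanishing corner entry\<close>

abbreviation tridiag :: "real \<Rightarrow> real \<Rightarrow> real \<Rightarrow> real \<Rightarrow> real \<Rightarrow> real \<Rightarrow> real^3^3" where
  "tridiag p11 p12 p21 p22 p23 p32 \<equiv>
     vector [vector [p11, p12, 0], vector [p21, p22, p23], vector [0, p32, 0]]"

lemma tridiag_eigen_eq_iff:
  fixes v :: "complex^3"
  shows "(\<chi> i j. complex_of_real (tridiag p11 p12 p21 p22 p23 p32 $ i $ j)) *v v = l *s v \<longleftrightarrow>
     of_real p11 * v$1 + of_real p12 * v$2 = l * v$1 \<and>
     of_real p21 * v$1 + of_real p22 * v$2 + of_real p23 * v$3 = l * v$2 \<and>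
     of_real p32 * v$2 = l * v$3"
  by (simp add: vec_eq_iff forall_3 matrix_vector_mult_def sum_3)

definition tridiag_char :: "real \<Rightarrow> real \<Rightarrow> real \<Rightarrow> real \<Rightarrow> real \<Rightarrow> real \<Rightarrow> complex \<Rightarrow> complex" where
  "tridiag_char p11 p12 p21 p22 p23 p32 l = (l - of_real p11) * ((l - of_real p22) * l - of_real p23 * of_real p32)
     - of_real p12 * of_real p21 * l"

context
  fixes p11 p12 p21 p22 p23 p32 :: real and l :: complex
  assumes nz: "p11 \<noteq> 0" "p12 \<noteq> 0" "p21 \<noteq> 0" "p23 \<noteq> 0" "p32 \<noteq> 0"
begin

lemma tridiag_eigenvector_imp_char:
  fixes v :: "complex^3"
  assumes v: "v \<noteq> 0"
    and e1: "of_real p11 * v$1 + of_real p12 * v$2 = l * v$1"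
    and e2: "of_real p21 * v$1 + of_real p22 * v$2 + of_real p23 * v$3 = l * v$2"
    and e3: "of_real p32 * v$2 = l * v$3"
  shows "tridiag_char p11 p12 p21 p22 p23 p32 l = 0"
proof (cases "v$2 = 0")
  case False
  have a: "(l - of_real p11) * v$1 = of_real p12 * v$2" using e1 by (simp add: algebra_simps)
  have "0 = l * (l - of_real p11) * (of_real p21 * v$1 + of_real p22 * v$2 + of_real p23 * v$3 - l * v$2)"
    using e2 by simp
  also have "\<dots> = of_real p21 * l * ((l - of_real p11) * v$1) + l * (l - of_real p11) * (of_real p22 - l) * v$2
       + of_real p23 * (l - of_real p11) * (l * v$3)" by (simp add: algebra_simps)
  also have "\<dots> = - (tridiag_char p11 p12 p21 p22 p23 p32 l * v$2)"
    unfolding a e3[symmetric] tridiag_char_def by (simp add: algebra_simps)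
  finally show ?thesis using False by simp
next
  case True
  text \<open>A null middle component forces the whole eigenvector to vanish.\<close>
  have "v$1 \<noteq> 0 \<or> v$3 \<noteq> 0" using v True by (auto simp: vec_eq_iff forall_3)
  moreover have "(of_real p11 - l) * v$1 = 0" "l * v$3 = 0" "of_real p21 * v$1 + of_real p23 * v$3 = 0"
    using e1 e2 e3 True by (simp_all add: algebra_simps)
  ultimately show ?thesis using nz by (cases "l = of_real p11") auto
qed

lemma tridiag_char_imp_eigenvector:
  assumes "tridiag_char p11 p12 p21 p22 p23 p32 l = 0"
  defines "v \<equiv> vector [of_real p12 * l, l * (l - of_real p11), of_real p32 * (l - of_real p11)] :: complex^3"
  shows "v \<noteq> 0" "(\<chi> i j. complex_of_real (tridiag p11 p12 p21 p22 p23 p32 $ i $ j)) *v v = l *s v"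
proof -
  have v: "v$1 = of_real p12 * l" "v$2 = l * (l - of_real p11)" "v$3 = of_real p32 * (l - of_real p11)"
    unfolding v_def by simp_all
  show "v \<noteq> 0"
  proof
    assume "v = 0"
    hence "v$1 = 0" "v$2 = 0" "v$3 = 0" by simp_all
    thus False using v nz by (cases "l = 0") auto
  qed
  show "(\<chi> i j. complex_of_real (tridiag p11 p12 p21 p22 p23 p32 $ i $ j)) *v v = l *s v"
    unfolding tridiag_eigen_eq_iff v
    using assms(1) unfolding tridiag_char_def by (simp add: algebra_simps)
qed

end

lemma eigenvalues_tridiag:
  assumes "p11 \<noteq> 0" "p12 \<noteq> 0" "p21 \<noteq> 0" "p23 \<noteq> 0" "p32 \<noteq> 0"
  shows "eigenvalues (tridiag p11 p12 p21 p22 p23 p32) =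
    {l. l^3 + of_real (- (p11 + p22)) * l^2 + of_real (p11*p22 - p12*p21 - p23*p32) * l
        + of_real (p11*p23*p32) = 0}"
proof -
  have char: "tridiag_char p11 p12 p21 p22 p23 p32 l = l^3 + of_real (- (p11 + p22)) * l^2
      + of_real (p11*p22 - p12*p21 - p23*p32) * l + of_real (p11*p23*p32)" for l
    unfolding tridiag_char_def by (simp add: power2_eq_square power3_eq_cube algebra_simps)
  have "l \<in> eigenvalues (tridiag p11 p12 p21 p22 p23 p32) \<longleftrightarrow> tridiag_char p11 p12 p21 p22 p23 p32 l = 0" for l
    using tridiag_eigenvector_imp_char[OF assms] tridiag_char_imp_eigenvector[OF assms]
    unfolding eigenvalues_def tridiag_eigen_eq_iff by blast
  thus ?thesis unfolding char by auto
qed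

lemma eigenvalues_tridiag_neg_disc:
  assumes nz: "p11 \<noteq> 0" "p12 \<noteq> 0" "p21 \<noteq> 0" "p23 \<noteq> 0" "p32 \<noteq> 0"
    and disc: "cubic_disc (- (p11 + p22)) (p11*p22 - p12*p21 - p23*p32) (p11*p23*p32) < 0"
    and c0: "0 < p11*p23*p32"
  defines "r \<equiv> cubic_real_root (- (p11 + p22)) (p11*p22 - p12*p21 - p23*p32) (p11*p23*p32)"
  shows "\<exists>\<omega>. r < 0 \<and> \<omega> \<noteq> 0 \<and> eigenvalues (tridiag p11 p12 p21 p22 p23 p32)
     = {complex_of_real r, Complex (- (- (p11 + p22) + r) / 2) \<omega>, Complex (- (- (p11 + p22) + r) / 2) (- \<omega>)}"
  unfolding eigenvalues_tridiag[OF nz] r_def by (rule cubic_complex_roots[OF disc c0])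

section \<open>Level sets of increasing functions on the half-line\<close>

lemma has_real_derivative_at_pos:
  assumes "0 < x" "(f has_real_derivative d) (at x within {0..})"
  shows "(f has_real_derivative d) (at x)"
proof -
  have "interior {0::real..} = {0<..}" by (rule interior_Ici[of "-1"]) simp
  hence "at x within {0..} = at x" using assms(1) by (intro at_within_interior) simp
  thus ?thesis using assms(2) by simp
qed

lemma strict_mono_on_deriv_pos:
  fixes f df :: "real \<Rightarrow> real"
  assumes deriv: "\<forall>x\<ge>0. (f has_real_derivative df x) (at x within {0..})" and pos: "\<forall>x\<ge>0. 0 < df x"
  shows "strict_mono_on {0..} f"
proof (rule strict_mono_onI)
  fix a b :: real assume "a \<in> {0..}" "b \<in> {0..}" "a < b"
  hence a: "0 \<le> a" "a < b" by auto
  have cont: "continuous_on {0..} f" using deriv by (intro DERIV_continuous_on) auto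
  show "f a < f b"
  proof (rule DERIV_pos_imp_increasing_open[OF a(2)])
    fix x assume "a < x" "x < b"
    hence "0 < x" using a by simp
    thus "\<exists>y. DERIV f x :> y \<and> 0 < y"
      using has_real_derivative_at_pos[OF _ deriv[rule_format]] pos by (intro exI[of _ "df x"]) auto
  qed (use a in \<open>auto intro: continuous_on_subset[OF cont]\<close>)
qed

lemma lvl_eq:
  assumes "strict_mono_on {0..} f" "0 \<le> x" "f x = c"
  shows "lvl f c = x"
  unfolding lvl_def
proof (rule the_equality)
  fix y assume "0 \<le> y \<and> f y = c"
  thus "y = x" using strict_mono_on_eqD[OF assms(1), of y x] assms by simp
qed (use assms in simp)

lemma tendsto_lvl:
  fixes f :: "real \<Rightarrow> real"
  assumes mono: "strict_mono_on {0..} f" and cont: "continuous_on {0..} f" and x0: "0 < x0"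
    and lim: "(c \<longlongrightarrow> f x0) F"
  shows "((\<lambda>y. lvl f (c y)) \<longlongrightarrow> x0) F"
  unfolding lvl_def
proof (rule tendsto_The)
  show "eventually (\<lambda>y. \<forall>x x'. 0 \<le> x \<and> f x = c y \<longrightarrow> 0 \<le> x' \<and> f x' = c y \<longrightarrow> x = x') F"
    using strict_mono_on_eqD[OF mono] by (intro always_eventually) auto
next
  fix e :: real assume e: "0 < e"
  define e' where "e' = min (e/2) (x0/2)"
  have e': "0 < e'" "e' < e" "0 < x0 - e'" unfolding e'_def using e x0 by auto
  have "f (x0 - e') < f x0" "f x0 < f (x0 + e')" using e' by (auto intro!: strict_mono_onD[OF mono])
  hence "eventually (\<lambda>y. f (x0 - e') < c y) F" "eventually (\<lambda>y. c y < f (x0 + e')) F"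
    using order_tendstoD[OF lim] by blast+
  thus "eventually (\<lambda>y. \<exists>x. \<bar>x - x0\<bar> < e \<and> 0 \<le> x \<and> f x = c y) F"
  proof eventually_elim
    case (elim y)
    have "continuous_on {x0 - e'..x0 + e'} f" using continuous_on_subset[OF cont] e' by auto
    then obtain x where "x0 - e' \<le> x" "x \<le> x0 + e'" "f x = c y"
      using IVT'[of f "x0 - e'" "c y" "x0 + e'"] elim e' by auto
    thus ?case using e' by (intro exI[of _ x]) auto
  qed
qed

lemma exceeds_below_Lim_at_top:
  fixes f :: "real \<Rightarrow> real"
  assumes mono: "strict_mono_on {0..} f" and bdd: "bounded (f ` {0..})" and c: "c < Lim at_top f"
  shows "\<exists>x\<ge>0. c < f x"
proof -
  define g where "g x = f (max x 0)" for x
  have mono_g: "mono g" unfolding g_def mono_def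
    by (metis atLeast_iff max.cobounded2 max.mono order.refl strict_mono_on_leD[OF mono])
  obtain B where B: "\<forall>x\<in>f ` {0..}. norm x \<le> B" using bdd bounded_iff by blast
  have "bdd_above (range (\<lambda>n. g (real n)))"
    unfolding bdd_above_def using B by (intro exI[of _ B]) (force simp: g_def abs_le_iff)
  moreover have "incseq (\<lambda>n. g (real n))" using mono_g unfolding incseq_def mono_def by simp
  ultimately have "(\<lambda>n. g (real n)) \<longlonglongrightarrow> (SUP i. g (real i))" by (rule LIMSEQ_incseq_SUP)
  hence "(g \<longlongrightarrow> (SUP i. g (real i))) at_top" by (rule tendsto_at_topI_sequentially_real[OF mono_g])
  moreover have "eventually (\<lambda>x. g x = f x) at_top"
    unfolding g_def using eventually_ge_at_top[of 0] by (rule eventually_mono) simp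
  ultimately have lim: "(f \<longlongrightarrow> (SUP i. g (real i))) at_top" using tendsto_cong by blast
  hence "Lim at_top f = (SUP i. g (real i))" by (intro tendsto_Lim) simp_all
  hence "eventually (\<lambda>x. c < f x) at_top" using order_tendstoD(1)[OF lim] c by simp
  hence "eventually (\<lambda>x. c < f x \<and> 0 \<le> x) at_top"
    using eventually_ge_at_top[of 0] by eventually_elim auto
  thus ?thesis using eventually_happens trivial_limit_at_top_linorder by blast
qed

lemma lvl_pos:
  fixes f :: "real \<Rightarrow> real"
  assumes mono: "strict_mono_on {0..} f" and cont: "continuous_on {0..} f" and f0: "f 0 = 0"
    and bdd: "bounded (f ` {0..})" and c: "c < Lim at_top f" "0 < c"
  shows "0 < lvl f c" "f (lvl f c) = c"
proof -
  obtain x where x: "0 \<le> x" "c < f x" using exceeds_below_Lim_at_top[OF mono bdd c(1)] by blast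
  obtain y where y: "0 \<le> y" "y \<le> x" "f y = c"
    using IVT'[of f 0 c x] x c f0 continuous_on_subset[OF cont] by force
  moreover have "y \<noteq> 0" using y c f0 by auto
  ultimately show "0 < lvl f c" "f (lvl f c) = c" using lvl_eq[OF mono y(1) y(3)] by auto
qed

lemma eventually_lvl_pos:
  fixes f :: "real \<Rightarrow> real"
  assumes mono: "strict_mono_on {0..} f" and cont: "continuous_on {0..} f" and x0: "0 < x0"
    and lim: "(c \<longlongrightarrow> f x0) F"
  shows "eventually (\<lambda>y. 0 < lvl f (c y) \<and> f (lvl f (c y)) = c y) F"
proof -
  have "f 0 < f x0" "f x0 < f (x0 + 1)" using x0 by (auto intro!: strict_mono_onD[OF mono])
  hence "eventually (\<lambda>y. f 0 < c y) F" "eventually (\<lambda>y. c y < f (x0 + 1)) F"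
    using order_tendstoD[OF lim] by blast+
  moreover have "eventually (\<lambda>y. 0 < lvl f (c y)) F"
    using order_tendstoD(1)[OF tendsto_lvl[OF mono cont x0 lim] x0] .
  ultimately show ?thesis
  proof eventually_elim
    case (elim y)
    obtain z where z: "0 \<le> z" "z \<le> x0 + 1" "f z = c y"
      using IVT'[of f 0 "c y" "x0 + 1"] elim x0 continuous_on_subset[OF cont] by force
    show ?case using elim lvl_eq[OF mono z(1) z(3)] z by simp
  qed
qed

section \<open>The nutrient equilibrium\<close>

definition nutrient_level :: "(real \<Rightarrow> real) \<Rightarrow> real \<Rightarrow> real \<Rightarrow> real \<Rightarrow> real" where
  "nutrient_level f D q m = (THE N. 0 < N \<and> N < m \<and> (m - N) * D - q * f N = 0)"

context
  fixes f :: "real \<Rightarrow> real" and D :: real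
  assumes mono: "strict_mono_on {0..} f" and cont: "continuous_on {0..} f" and f0: "f 0 = 0"
    and D: "0 < D"
begin

lemma nutrient_balance_strict_antimono:
  assumes "0 < q" "0 \<le> N" "N < N'"
  shows "(m - N') * D - q * f N' < (m - N) * D - q * f N"
proof -
  have "q * f N < q * f N'" using assms by (auto intro: strict_mono_onD[OF mono])
  moreover have "(m - N') * D < (m - N) * D" using assms D by simp
  ultimately show ?thesis by linarith
qed

lemma nutrient_balance_unique:
  assumes "0 < q" "0 \<le> N" "0 \<le> N'"
    and "(m - N) * D - q * f N = 0" "(m - N') * D - q * f N' = 0"
  shows "N = N'"
  using nutrient_balance_strict_antimono[of q N N' m] nutrient_balance_strict_antimono[of q N' N m] assms
  by (cases N N' rule: linorder_cases) auto

lemma nutrient_level: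
  assumes q: "0 < q" and m: "0 < m"
  shows "0 < nutrient_level f D q m" "nutrient_level f D q m < m"
    "(m - nutrient_level f D q m) * D - q * f (nutrient_level f D q m) = 0"
proof -
  have fm: "0 < f m" using strict_mono_onD[OF mono, of 0 m] m f0 by auto
  have "continuous_on {0..m} (\<lambda>N. (m - N) * D - q * f N)"
    by (intro continuous_intros continuous_on_subset[OF cont]) auto
  then obtain N where N: "0 \<le> N" "N \<le> m" "(m - N) * D - q * f N = 0"
    using IVT2'[of "\<lambda>N. (m - N) * D - q * f N" m 0 0] m D q fm f0 by auto
  have "N \<noteq> 0"
  proof
    assume "N = 0"
    with N(3) f0 have "m * D = 0" by simp
    with m D show False by simp
  qed
  moreover have "N \<noteq> m"
  proof
    assume "N = m"
    with N(3) have "q * f m = 0" by simp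
    with q fm show False by simp
  qed
  ultimately have N': "0 < N" "N < m" using N by auto
  have "nutrient_level f D q m = N"
    unfolding nutrient_level_def
  proof (rule the_equality)
    show "0 < N \<and> N < m \<and> (m - N) * D - q * f N = 0" using N N' by simp
    fix N'' assume "0 < N'' \<and> N'' < m \<and> (m - N'') * D - q * f N'' = 0"
    thus "N'' = N" using nutrient_balance_unique[OF q, of N'' N m] N by simp
  qed
  thus "0 < nutrient_level f D q m" "nutrient_level f D q m < m"
    "(m - nutrient_level f D q m) * D - q * f (nutrient_level f D q m) = 0"
    using N N' by auto
qed

lemma tendsto_nutrient_level:
  assumes q0: "0 < q0" and m0: "0 < m0"
    and lim_q: "(q \<longlongrightarrow> q0) F" and lim_m: "(m \<longlongrightarrow> m0) F"
  shows "((\<lambda>y. nutrient_level f D (q y) (m y)) \<longlongrightarrow> nutrient_level f D q0 m0) F"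
proof -
  define N0 where "N0 = nutrient_level f D q0 m0"
  note N0 = nutrient_level[OF q0 m0, folded N0_def]
  have q_pos: "eventually (\<lambda>y. 0 < q y) F" using order_tendstoD(1)[OF lim_q q0] .
  have "((\<lambda>y. THE x. 0 < x \<and> x < m y \<and> (m y - x) * D - q y * f x = 0) \<longlongrightarrow> N0) F"
  proof (rule tendsto_The)
    show "eventually (\<lambda>y. \<forall>x x'. 0 < x \<and> x < m y \<and> (m y - x) * D - q y * f x = 0 \<longrightarrow>
        0 < x' \<and> x' < m y \<and> (m y - x') * D - q y * f x' = 0 \<longrightarrow> x = x') F"
      using q_pos by (rule eventually_mono) (auto intro: nutrient_balance_unique)
  next
    fix e :: real assume e: "0 < e"
    define e' where "e' = min (e/2) (N0/2)"
    have e': "0 < e'" "e' < e" "0 < N0 - e'" unfolding e'_def using e N0 by auto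
    have "(m0 - (N0 + e')) * D - q0 * f (N0 + e') < 0" "0 < (m0 - (N0 - e')) * D - q0 * f (N0 - e')"
      using nutrient_balance_strict_antimono[OF q0, of N0 "N0 + e'" m0]
        nutrient_balance_strict_antimono[OF q0, of "N0 - e'" N0 m0] N0(3) e' by auto
    moreover have "((\<lambda>y. (m y - x) * D - q y * f x) \<longlongrightarrow> (m0 - x) * D - q0 * f x) F" for x
      by (intro tendsto_intros lim_q lim_m)
    ultimately have "eventually (\<lambda>y. (m y - (N0 + e')) * D - q y * f (N0 + e') < 0) F"
      "eventually (\<lambda>y. 0 < (m y - (N0 - e')) * D - q y * f (N0 - e')) F"
      using order_tendstoD by blast+
    with q_pos show "eventually (\<lambda>y. \<exists>x. \<bar>x - N0\<bar> < e \<and>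
        0 < x \<and> x < m y \<and> (m y - x) * D - q y * f x = 0) F"
    proof eventually_elim
      case (elim y)
      have "continuous_on {N0 - e'..N0 + e'} (\<lambda>N. (m y - N) * D - q y * f N)"
        using e' by (intro continuous_intros continuous_on_subset[OF cont]) auto
      then obtain x where x: "N0 - e' \<le> x" "x \<le> N0 + e'" "(m y - x) * D - q y * f x = 0"
        using IVT2'[of "\<lambda>N. (m y - N) * D - q y * f N" "N0 + e'" 0 "N0 - e'"] elim e' by auto
      have "0 < x" using x e' by auto
      hence "0 < f x" using strict_mono_onD[OF mono, of 0 x] f0 by auto
      hence "x < m y" using x elim D by (smt (verit) mult_pos_pos mult_le_0_iff)
      thus ?case using x \<open>0 < x\<close> e' by (intro exI[of _ x]) auto
    qed
  qed
  thus ?thesis unfolding nutrient_level_def N0_def .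
qed

text \<open>The nutrient level inverts \<open>N \<mapsto> N + q f N / D\<close>.\<close>

lemma has_real_derivative_nutrient_level:
  assumes q: "0 < q" and m: "0 < m"
    and deriv: "(f has_real_derivative df) (at (nutrient_level f D q m))" and df: "0 \<le> df"
  shows "((\<lambda>m. nutrient_level f D q m) has_real_derivative D / (D + q * df)) (at m)"
proof -
  have "((\<lambda>N. N + q * f N / D) has_real_derivative 1 + q * df / D) (at (nutrient_level f D q m))"
    using D by (auto intro!: derivative_eq_intros deriv)
  moreover have "1 + q * df / D \<noteq> 0" using q df D by (smt (verit) divide_nonneg_pos mult_nonneg_nonneg)
  moreover have "nutrient_level f D q y + q * f (nutrient_level f D q y) / D = y" if "0 < y" for y
    using nutrient_level(3)[OF q that] D by (simp add: field_simps)
  moreover have "isCont (\<lambda>m. nutrient_level f D q m) m"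
    unfolding isCont_def using tendsto_nutrient_level[OF q m tendsto_const tendsto_ident_at] .
  ultimately have "((\<lambda>m. nutrient_level f D q m) has_real_derivative inverse (1 + q * df / D)) (at m)"
    using m by (intro DERIV_inverse_function[where a = 0 and b = "m + 1"]) auto
  moreover have "inverse (1 + q * df / D) = D / (D + q * df)" using D by (simp add: field_simps)
  ultimately show ?thesis by simp
qed

end

section \<open>The coexistence equilibrium and its Jacobian\<close>

locale npz_model =
  fixes f1 f2 df1 ddf1 df2 :: "real \<Rightarrow> real" and D g1 g2 :: real
  assumes D_pos: "0 < D" and g1_pos: "0 < g1" and g2_pos: "0 < g2"
    and f1_bdd: "bounded (f1 ` {0..})" and f2_bdd: "bounded (f2 ` {0..})"
    and f1_0: "f1 0 = 0" and f2_0: "f2 0 = 0"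
    and f1_deriv: "\<forall>x\<ge>0. (f1 has_real_derivative df1 x) (at x within {0..})"
    and f2_deriv: "\<forall>x\<ge>0. (f2 has_real_derivative df2 x) (at x within {0..})"
    and df2_cont: "continuous_on {0..} df2"
    and df1_pos: "\<forall>x\<ge>0. 0 < df1 x" and df2_pos: "\<forall>x\<ge>0. 0 < df2 x"
    and f1_Lim: "D / g1 < Lim at_top f1" and f2_Lim: "D / g2 < Lim at_top f2"
    and df1_deriv: "\<forall>x\<ge>0. (df1 has_real_derivative ddf1 x) (at x within {0..})"
    and ddf1_cont: "\<forall>x>0. isCont ddf1 x"
begin

lemma f1_strict_mono: "strict_mono_on {0..} f1"
  using strict_mono_on_deriv_pos[OF f1_deriv df1_pos] .

lemma f2_strict_mono: "strict_mono_on {0..} f2"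
  using strict_mono_on_deriv_pos[OF f2_deriv df2_pos] .

lemma f1_continuous_on: "continuous_on {0..} f1"
  using f1_deriv by (intro DERIV_continuous_on) auto

lemma f2_continuous_on: "continuous_on {0..} f2"
  using f2_deriv by (intro DERIV_continuous_on) auto

lemma f1_deriv_at: "0 < x \<Longrightarrow> (f1 has_real_derivative df1 x) (at x)"
  using has_real_derivative_at_pos f1_deriv by simp

lemma df1_deriv_at: "0 < x \<Longrightarrow> (df1 has_real_derivative ddf1 x) (at x)"
  using has_real_derivative_at_pos df1_deriv by simp

lemma isCont_f1: "0 < x \<Longrightarrow> isCont f1 x"
  using DERIV_isCont[OF f1_deriv_at] .

lemma isCont_df1: "0 < x \<Longrightarrow> isCont df1 x"
  using DERIV_isCont[OF df1_deriv_at] .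

lemma f2_deriv_at: "0 < x \<Longrightarrow> (f2 has_real_derivative df2 x) (at x)"
  using has_real_derivative_at_pos f2_deriv by simp

lemma isCont_f2: "0 < x \<Longrightarrow> isCont f2 x"
  using DERIV_isCont[OF f2_deriv_at] .

lemma isCont_df2: "0 < x \<Longrightarrow> isCont df2 x"
proof -
  assume "0 < x"
  moreover have "interior {0::real..} = {0<..}" by (rule interior_Ici[of "-1"]) simp
  ultimately show ?thesis using continuous_on_interior[OF df2_cont] by simp
qed

definition Pst :: "real \<Rightarrow> real" where
  "Pst d2 = lamZ f2 g2 d2"

definition Nst :: "real \<Rightarrow> real \<Rightarrow> real" where
  "Nst mu d2 = nutrient_level f1 D (Pst d2) mu"

definition Zst :: "real \<Rightarrow> real \<Rightarrow> real \<Rightarrow> real" where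
  "Zst mu d1 d2 = g2 / d2 * Pst d2 * (g1 * f1 (Nst mu d2) - d1)"

definition "j11 mu d1 d2 = - D - Pst d2 * df1 (Nst mu d2)"
definition "j12 mu d1 d2 = - f1 (Nst mu d2)"
definition "j21 mu d1 d2 = g1 * Pst d2 * df1 (Nst mu d2)"
definition "j22 mu d1 d2 = g1 * f1 (Nst mu d2) - d1 - Zst mu d1 d2 * df2 (Pst d2)"
definition "j23 mu d1 d2 = - f2 (Pst d2)"
definition "j32 mu d1 d2 = g2 * Zst mu d1 d2 * df2 (Pst d2)"

text \<open>At the equilibrium the \<open>(3,3)\<close> entry of the Jacobian vanishes, leaving the characteristic
  polynomial \<open>\<lambda>\<^sup>3 + c2 \<lambda>\<^sup>2 + c1 \<lambda> + c0\<close>.\<close>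

definition "c2 mu d1 d2 = - (j11 mu d1 d2 + j22 mu d1 d2)"
definition "c1 mu d1 d2 = j11 mu d1 d2 * j22 mu d1 d2 - j12 mu d1 d2 * j21 mu d1 d2 - j23 mu d1 d2 * j32 mu d1 d2"
definition "c0 mu d1 d2 = j11 mu d1 d2 * j23 mu d1 d2 * j32 mu d1 d2"

definition "real_eig mu d1 d2 = cubic_real_root (c2 mu d1 d2) (c1 mu d1 d2) (c0 mu d1 d2)"

text \<open>The eigenvalues sum to \<open>- c2\<close>, so this is the real part of the complex pair.\<close>

definition "re_eig mu d1 d2 = - (c2 mu d1 d2 + real_eig mu d1 d2) / 2"

lemma Neq_eq_Nst: "Neq f1 f2 D g1 g2 mu d1 d2 = Nst mu d2"
  unfolding Neq_def Nst_def nutrient_level_def Pst_def ..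

lemma Zeq_eq_Zst: "Zeq f1 f2 D g1 g2 mu d1 d2 = Zst mu d1 d2"
  unfolding Zeq_def Zst_def Neq_eq_Nst Pst_def ..

lemma muc1_eq: "muc1 f1 f2 D g1 g2 d1 d2 = lvl f1 (d1 / g1) + d1 * Pst d2 / (D * g1)"
  unfolding muc1_def lamP_def Pst_def ..

lemma jac_E2_eq:
  assumes "f2 (Pst d2) = d2 / g2"
  shows "jac f1 f2 df1 df2 D g1 g2 d1 d2 (E2 f1 f2 D g1 g2 mu d1 d2) =
    tridiag (j11 mu d1 d2) (j12 mu d1 d2) (j21 mu d1 d2) (j22 mu d1 d2) (j23 mu d1 d2) (j32 mu d1 d2)"
  using assms g2_pos
  unfolding jac_def E2_def Neq_eq_Nst Zeq_eq_Zst j11_def j12_def j21_def j22_def j23_def j32_def Pst_def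
  by (simp add: algebra_simps)

lemma Pst_D: "0 < Pst D" "f2 (Pst D) = D / g2"
  unfolding Pst_def lamZ_def
  using lvl_pos[OF f2_strict_mono f2_continuous_on f2_0 f2_bdd f2_Lim] D_pos g2_pos by auto

lemma lamP_D: "0 < lamP f1 g1 D" "f1 (lamP f1 g1 D) = D / g1"
  unfolding lamP_def
  using lvl_pos[OF f1_strict_mono f1_continuous_on f1_0 f1_bdd f1_Lim] D_pos g1_pos by auto

lemma muc1_D_pos: "0 < muc1 f1 f2 D g1 g2 D D"
  unfolding muc1_def using lamP_D(1) D_pos g1_pos Pst_D(1) unfolding Pst_def
  by (simp add: add_pos_pos)

lemma Nst:
  assumes "0 < mu" "0 < Pst d2"
  shows "0 < Nst mu d2" "Nst mu d2 < mu" "(mu - Nst mu d2) * D - Pst d2 * f1 (Nst mu d2) = 0"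
  unfolding Nst_def using nutrient_level[OF f1_strict_mono f1_continuous_on f1_0 D_pos assms(2,1)] by auto

lemma eigenvalues_jac_E2:
  assumes P: "f2 (Pst d2) = d2 / g2"
    and nz: "j11 mu d1 d2 \<noteq> 0" "j12 mu d1 d2 \<noteq> 0" "j21 mu d1 d2 \<noteq> 0" "j23 mu d1 d2 \<noteq> 0" "j32 mu d1 d2 \<noteq> 0"
    and disc: "cubic_disc (c2 mu d1 d2) (c1 mu d1 d2) (c0 mu d1 d2) < 0" and c0: "0 < c0 mu d1 d2"
  shows "\<exists>\<omega>. real_eig mu d1 d2 < 0 \<and> \<omega> \<noteq> 0 \<and>
    eigenvalues (jac f1 f2 df1 df2 D g1 g2 d1 d2 (E2 f1 f2 D g1 g2 mu d1 d2))
      = {complex_of_real (real_eig mu d1 d2), Complex (re_eig mu d1 d2) \<omega>, Complex (re_eig mu d1 d2) (- \<omega>)}"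
  using eigenvalues_tridiag_neg_disc[OF nz disc[unfolded c2_def c1_def c0_def] c0[unfolded c0_def]]
  unfolding jac_E2_eq[OF P] real_eig_def re_eig_def c2_def c1_def c0_def .

section \<open>Derivatives with respect to \<open>\<mu>\<close>\<close>

text \<open>Each primed constant is the \<open>\<mu>\<close>-derivative of the unprimed one.\<close>

definition "Nst' mu d2 = D / (D + Pst d2 * df1 (Nst mu d2))"
definition "Zst' mu d1 d2 = g2 / d2 * Pst d2 * (g1 * (df1 (Nst mu d2) * Nst' mu d2))"
definition "j11' mu d1 d2 = - (Pst d2 * (ddf1 (Nst mu d2) * Nst' mu d2))"
definition "j12' mu d1 d2 = - (df1 (Nst mu d2) * Nst' mu d2)"
definition "j21' mu d1 d2 = g1 * Pst d2 * (ddf1 (Nst mu d2) * Nst' mu d2)"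
definition "j22' mu d1 d2 = g1 * (df1 (Nst mu d2) * Nst' mu d2) - Zst' mu d1 d2 * df2 (Pst d2)"
definition "j32' mu d1 d2 = g2 * Zst' mu d1 d2 * df2 (Pst d2)"
definition "c2' mu d1 d2 = - (j11' mu d1 d2 + j22' mu d1 d2)"
definition "c1' mu d1 d2 = j11' mu d1 d2 * j22 mu d1 d2 + j11 mu d1 d2 * j22' mu d1 d2
   - (j12' mu d1 d2 * j21 mu d1 d2 + j12 mu d1 d2 * j21' mu d1 d2) - j23 mu d1 d2 * j32' mu d1 d2"
definition "c0' mu d1 d2 = j11' mu d1 d2 * j23 mu d1 d2 * j32 mu d1 d2 + j11 mu d1 d2 * j23 mu d1 d2 * j32' mu d1 d2"
definition "real_eig' mu d1 d2 =
  - (c2' mu d1 d2 * (real_eig mu d1 d2)^2 + c1' mu d1 d2 * real_eig mu d1 d2 + c0' mu d1 d2)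
   / (3 * (real_eig mu d1 d2)^2 + 2 * c2 mu d1 d2 * real_eig mu d1 d2 + c1 mu d1 d2)"
definition "re_eig' mu d1 d2 = - (c2' mu d1 d2 + real_eig' mu d1 d2) / 2"

context
  fixes d1 d2 mu :: real
  assumes P: "0 < Pst d2" and mu: "0 < mu" and d2: "0 < d2"
begin

lemma has_real_derivative_Nst: "((\<lambda>mu. Nst mu d2) has_real_derivative Nst' mu d2) (at mu)"
proof -
  have "0 \<le> df1 (Nst mu d2)" using df1_pos Nst(1)[OF mu P] by (simp add: less_imp_le)
  from has_real_derivative_nutrient_level[OF f1_strict_mono f1_continuous_on f1_0 D_pos P mu
      f1_deriv_at[OF Nst(1)[OF mu P], unfolded Nst_def] this[unfolded Nst_def]]
  show ?thesis unfolding Nst_def Nst'_def .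
qed

lemma has_real_derivative_f1_Nst:
  "((\<lambda>mu. f1 (Nst mu d2)) has_real_derivative df1 (Nst mu d2) * Nst' mu d2) (at mu)"
  by (rule DERIV_chain2[OF f1_deriv_at[OF Nst(1)[OF mu P]] has_real_derivative_Nst])

lemma has_real_derivative_df1_Nst:
  "((\<lambda>mu. df1 (Nst mu d2)) has_real_derivative ddf1 (Nst mu d2) * Nst' mu d2) (at mu)"
  by (rule DERIV_chain2[OF df1_deriv_at[OF Nst(1)[OF mu P]] has_real_derivative_Nst])

lemma has_real_derivative_jac_entries:
  "((\<lambda>mu. Zst mu d1 d2) has_real_derivative Zst' mu d1 d2) (at mu)"
  "((\<lambda>mu. j11 mu d1 d2) has_real_derivative j11' mu d1 d2) (at mu)"
  "((\<lambda>mu. j12 mu d1 d2) has_real_derivative j12' mu d1 d2) (at mu)"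
  "((\<lambda>mu. j21 mu d1 d2) has_real_derivative j21' mu d1 d2) (at mu)"
  "((\<lambda>mu. j22 mu d1 d2) has_real_derivative j22' mu d1 d2) (at mu)"
  "((\<lambda>mu. j23 mu d1 d2) has_real_derivative 0) (at mu)"
  "((\<lambda>mu. j32 mu d1 d2) has_real_derivative j32' mu d1 d2) (at mu)"
  unfolding Zst_def Zst'_def j11_def j11'_def j12_def j12'_def j21_def j21'_def j22_def j22'_def
    j23_def j32_def j32'_def
  using d2 by (auto intro!: derivative_eq_intros has_real_derivative_f1_Nst has_real_derivative_df1_Nst)

lemma has_real_derivative_re_eig:
  assumes disc: "cubic_disc (c2 mu d1 d2) (c1 mu d1 d2) (c0 mu d1 d2) < 0"
  shows "((\<lambda>mu. re_eig mu d1 d2) has_real_derivative re_eig' mu d1 d2) (at mu)"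
proof -
  have coeffs: "((\<lambda>mu. c2 mu d1 d2) has_real_derivative c2' mu d1 d2) (at mu)"
    "((\<lambda>mu. c1 mu d1 d2) has_real_derivative c1' mu d1 d2) (at mu)"
    "((\<lambda>mu. c0 mu d1 d2) has_real_derivative c0' mu d1 d2) (at mu)"
    unfolding c2_def c2'_def c1_def c1'_def c0_def c0'_def
    by (auto intro!: derivative_eq_intros has_real_derivative_jac_entries simp: algebra_simps)
  have "((\<lambda>mu. real_eig mu d1 d2) has_real_derivative real_eig' mu d1 d2) (at mu)"
    unfolding real_eig_def real_eig'_def using has_real_derivative_cubic_real_root[OF coeffs disc] .
  thus ?thesis unfolding re_eig_def re_eig'_def by (auto intro!: derivative_eq_intros coeffs)
qed

end

section \<open>Dependence on the parameters\<close>

context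
  fixes F :: "'x filter" and m e1 e2 :: "'x \<Rightarrow> real" and mu0 :: real
  assumes lim_m: "(m \<longlongrightarrow> mu0) F" and lim_e1: "(e1 \<longlongrightarrow> D) F" and lim_e2: "(e2 \<longlongrightarrow> D) F"
    and mu0_pos: "0 < mu0"
begin

lemma tendsto_f2_level: "((\<lambda>y. e2 y / g2) \<longlongrightarrow> f2 (Pst D)) F"
  unfolding Pst_D(2) using g2_pos by (intro tendsto_intros lim_e2) auto

lemma tendsto_Pst: "((\<lambda>y. Pst (e2 y)) \<longlongrightarrow> Pst D) F"
  using tendsto_lvl[OF f2_strict_mono f2_continuous_on Pst_D(1) tendsto_f2_level]
  unfolding Pst_def lamZ_def .

lemma eventually_Pst: "eventually (\<lambda>y. 0 < Pst (e2 y) \<and> f2 (Pst (e2 y)) = e2 y / g2) F"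
  using eventually_lvl_pos[OF f2_strict_mono f2_continuous_on Pst_D(1) tendsto_f2_level]
  unfolding Pst_def lamZ_def .

lemma tendsto_Nst: "((\<lambda>y. Nst (m y) (e2 y)) \<longlongrightarrow> Nst mu0 D) F"
  unfolding Nst_def
  using tendsto_nutrient_level[OF f1_strict_mono f1_continuous_on f1_0 D_pos Pst_D(1) mu0_pos tendsto_Pst lim_m] .

lemma tendsto_equilibrium_terms:
  "((\<lambda>y. f1 (Nst (m y) (e2 y))) \<longlongrightarrow> f1 (Nst mu0 D)) F"
  "((\<lambda>y. df1 (Nst (m y) (e2 y))) \<longlongrightarrow> df1 (Nst mu0 D)) F"
  "((\<lambda>y. ddf1 (Nst (m y) (e2 y))) \<longlongrightarrow> ddf1 (Nst mu0 D)) F"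
  "((\<lambda>y. f2 (Pst (e2 y))) \<longlongrightarrow> f2 (Pst D)) F"
  "((\<lambda>y. df2 (Pst (e2 y))) \<longlongrightarrow> df2 (Pst D)) F"
  using Nst(1)[OF mu0_pos Pst_D(1)] Pst_D(1)
  by (auto intro!: isCont_tendsto_compose[OF _ tendsto_Nst] isCont_tendsto_compose[OF _ tendsto_Pst]
      isCont_f1 isCont_df1 isCont_f2 isCont_df2 ddf1_cont[rule_format])

lemmas tendsto_equilibrium = tendsto_equilibrium_terms tendsto_Pst lim_e1 lim_e2

lemma tendsto_jac_entries:
  "((\<lambda>y. j11 (m y) (e1 y) (e2 y)) \<longlongrightarrow> j11 mu0 D D) F"
  "((\<lambda>y. j12 (m y) (e1 y) (e2 y)) \<longlongrightarrow> j12 mu0 D D) F"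
  "((\<lambda>y. j21 (m y) (e1 y) (e2 y)) \<longlongrightarrow> j21 mu0 D D) F"
  "((\<lambda>y. j23 (m y) (e1 y) (e2 y)) \<longlongrightarrow> j23 mu0 D D) F"
  "((\<lambda>y. j32 (m y) (e1 y) (e2 y)) \<longlongrightarrow> j32 mu0 D D) F"
  unfolding j11_def j12_def j21_def j23_def j32_def Zst_def
  by (intro tendsto_intros tendsto_equilibrium; use D_pos in simp)+

lemma tendsto_char_coeffs:
  "((\<lambda>y. c2 (m y) (e1 y) (e2 y)) \<longlongrightarrow> c2 mu0 D D) F"
  "((\<lambda>y. c1 (m y) (e1 y) (e2 y)) \<longlongrightarrow> c1 mu0 D D) F"
  "((\<lambda>y. c0 (m y) (e1 y) (e2 y)) \<longlongrightarrow> c0 mu0 D D) F"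
  unfolding c2_def c1_def c0_def j11_def j12_def j21_def j22_def j23_def j32_def Zst_def
  by (intro tendsto_intros tendsto_equilibrium; use D_pos in simp)+

lemma tendsto_muc1: "((\<lambda>y. muc1 f1 f2 D g1 g2 (e1 y) (e2 y)) \<longlongrightarrow> muc1 f1 f2 D g1 g2 D D) F"
proof -
  have "((\<lambda>y. e1 y / g1) \<longlongrightarrow> f1 (lamP f1 g1 D)) F"
    unfolding lamP_D(2) using g1_pos by (intro tendsto_intros lim_e1) auto
  hence "((\<lambda>y. lvl f1 (e1 y / g1)) \<longlongrightarrow> lamP f1 g1 D) F"
    using tendsto_lvl[OF f1_strict_mono f1_continuous_on lamP_D(1)] by blast
  hence "((\<lambda>y. lvl f1 (e1 y / g1) + e1 y * Pst (e2 y) / (D * g1)) \<longlongrightarrow> lamP f1 g1 D + D * Pst D / (D * g1)) F"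
    using D_pos g1_pos by (intro tendsto_intros lim_e1 tendsto_Pst) auto
  thus ?thesis unfolding muc1_eq lamP_def Pst_def .
qed

lemma tendsto_char_coeff_derivs:
  "((\<lambda>y. c2' (m y) (e1 y) (e2 y)) \<longlongrightarrow> c2' mu0 D D) F"
  "((\<lambda>y. c1' (m y) (e1 y) (e2 y)) \<longlongrightarrow> c1' mu0 D D) F"
  "((\<lambda>y. c0' (m y) (e1 y) (e2 y)) \<longlongrightarrow> c0' mu0 D D) F"
proof -
  have "0 < Pst D * df1 (Nst mu0 D)" using Pst_D(1) df1_pos Nst(1)[OF mu0_pos Pst_D(1)] by simp
  hence "D + Pst D * df1 (Nst mu0 D) \<noteq> 0" using D_pos by linarith
  thus "((\<lambda>y. c2' (m y) (e1 y) (e2 y)) \<longlongrightarrow> c2' mu0 D D) F"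
    "((\<lambda>y. c1' (m y) (e1 y) (e2 y)) \<longlongrightarrow> c1' mu0 D D) F"
    "((\<lambda>y. c0' (m y) (e1 y) (e2 y)) \<longlongrightarrow> c0' mu0 D D) F"
    unfolding c2'_def c1'_def c0'_def j11'_def j12'_def j21'_def j22'_def j32'_def Zst'_def Nst'_def
      j11_def j12_def j21_def j22_def j23_def j32_def Zst_def
    by (intro tendsto_intros tendsto_equilibrium; use D_pos in simp)+
qed

context
  assumes disc: "cubic_disc (c2 mu0 D D) (c1 mu0 D D) (c0 mu0 D D) < 0"
begin

lemma tendsto_real_eig: "((\<lambda>y. real_eig (m y) (e1 y) (e2 y)) \<longlongrightarrow> real_eig mu0 D D) F"
  unfolding real_eig_def by (rule tendsto_cubic_real_root[OF tendsto_char_coeffs disc])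

lemma tendsto_re_eig: "((\<lambda>y. re_eig (m y) (e1 y) (e2 y)) \<longlongrightarrow> re_eig mu0 D D) F"
  unfolding re_eig_def by (intro tendsto_intros tendsto_char_coeffs tendsto_real_eig) simp

lemma tendsto_re_eig': "((\<lambda>y. re_eig' (m y) (e1 y) (e2 y)) \<longlongrightarrow> re_eig' mu0 D D) F"
proof -
  have "0 < 3 * (real_eig mu0 D D)^2 + 2 * c2 mu0 D D * real_eig mu0 D D + c1 mu0 D D"
    unfolding real_eig_def using cubic_deriv_at_real_root_pos[OF disc] .
  thus ?thesis unfolding re_eig'_def real_eig'_def
    by (intro tendsto_intros tendsto_char_coeffs tendsto_real_eig tendsto_char_coeff_derivs) simp_all
qed

end

end

text \<open>At \<open>D1 = D2 = D\<close> the total mass \<open>N + P/g1 + Z/(g1 g2)\<close> relaxes to \<open>\<mu>\<close> at rate \<open>D\<close>,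
  so \<open>-D\<close> is always an eigenvalue.\<close>

lemma cubic_minus_D:
  assumes "0 < mu"
  shows "cubic (c2 mu D D) (c1 mu D D) (c0 mu D D) (- D) = 0"
  unfolding cubic_def c2_def c1_def c0_def j11_def j12_def j21_def j22_def j23_def j32_def Zst_def Pst_D(2)
  using D_pos g2_pos by (simp add: field_simps power2_eq_square power3_eq_cube)

definition admissible :: "real \<Rightarrow> real \<Rightarrow> real \<Rightarrow> bool" where
  "admissible mu d1 d2 \<longleftrightarrow> muc1 f1 f2 D g1 g2 d1 d2 < mu \<and> 0 < mu \<and> 0 < d2 \<and> 0 < Pst d2 \<and> f2 (Pst d2) = d2 / g2 \<and>
     j11 mu d1 d2 \<noteq> 0 \<and> j12 mu d1 d2 \<noteq> 0 \<and> j21 mu d1 d2 \<noteq> 0 \<and> j23 mu d1 d2 \<noteq> 0 \<and> j32 mu d1 d2 \<noteq> 0 \<and>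
     cubic_disc (c2 mu d1 d2) (c1 mu d1 d2) (c0 mu d1 d2) < 0 \<and> 0 < c0 mu d1 d2"

lemma admissible_eigenvalues:
  assumes "admissible mu d1 d2"
  shows "\<exists>\<omega>. real_eig mu d1 d2 < 0 \<and> \<omega> \<noteq> 0 \<and>
    eigenvalues (jac f1 f2 df1 df2 D g1 g2 d1 d2 (E2 f1 f2 D g1 g2 mu d1 d2))
      = {complex_of_real (real_eig mu d1 d2), Complex (re_eig mu d1 d2) \<omega>, Complex (re_eig mu d1 d2) (- \<omega>)}"
  using assms unfolding admissible_def by (intro eigenvalues_jac_E2) auto

lemma admissible_has_real_derivative_re_eig:
  assumes "admissible mu d1 d2"
  shows "((\<lambda>mu. re_eig mu d1 d2) has_real_derivative re_eig' mu d1 d2) (at mu)"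
  using assms unfolding admissible_def by (intro has_real_derivative_re_eig) auto

lemma re_eig_crosses_zero:
  assumes "0 < \<delta>" "0 < c" and small: "\<bar>re_eig mu0 D1 D2\<bar> < c * \<delta>"
    and adm: "\<And>mu. mu \<in> {mu0 - \<delta>..mu0 + \<delta>} \<Longrightarrow> admissible mu D1 D2"
    and fast: "\<And>mu. mu \<in> {mu0 - \<delta>..mu0 + \<delta>} \<Longrightarrow> c < re_eig' mu D1 D2"
  shows "(\<forall>mu\<in>{mu0 - \<delta>..mu0 + \<delta>}. muc1 f1 f2 D g1 g2 D1 D2 < mu) \<and>
    (\<exists>a a' :: real \<Rightarrow> real.
       (\<forall>mu\<in>{mu0 - \<delta>..mu0 + \<delta>}.
          (\<exists>r \<omega>. r < 0 \<and> \<omega> \<noteq> 0 \<and>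
             eigenvalues (jac f1 f2 df1 df2 D g1 g2 D1 D2 (E2 f1 f2 D g1 g2 mu D1 D2))
               = {complex_of_real r, Complex (a mu) \<omega>, Complex (a mu) (- \<omega>)}) \<and>
          (a has_real_derivative a' mu) (at mu within {mu0 - \<delta>..mu0 + \<delta>}) \<and>
          0 < a' mu) \<and>
       (\<exists>mus\<in>{mu0 - \<delta><..<mu0 + \<delta>}. a mus = 0))"
proof -
  have deriv: "((\<lambda>mu. re_eig mu D1 D2) has_real_derivative re_eig' mu D1 D2) (at mu)"
    if "mu \<in> {mu0 - \<delta>..mu0 + \<delta>}" for mu
    using admissible_has_real_derivative_re_eig[OF adm[OF that]] .
  from zero_crossing_of_uniformly_increasing[OF \<open>0 < \<delta>\<close> small deriv fast]
  have zero: "\<exists>mus\<in>{mu0 - \<delta><..<mu0 + \<delta>}. re_eig mus D1 D2 = 0" .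
  show ?thesis
  proof (rule conjI, use adm in \<open>force simp: admissible_def\<close>,
      rule exI[of _ "\<lambda>mu. re_eig mu D1 D2"], rule exI[of _ "\<lambda>mu. re_eig' mu D1 D2"], intro conjI ballI)
    fix mu assume mu: "mu \<in> {mu0 - \<delta>..mu0 + \<delta>}"
    show "\<exists>r \<omega>. r < 0 \<and> \<omega> \<noteq> 0 \<and>
        eigenvalues (jac f1 f2 df1 df2 D g1 g2 D1 D2 (E2 f1 f2 D g1 g2 mu D1 D2))
          = {complex_of_real r, Complex (re_eig mu D1 D2) \<omega>, Complex (re_eig mu D1 D2) (- \<omega>)}"
      using admissible_eigenvalues[OF adm[OF mu]] by blast
    show "((\<lambda>mu. re_eig mu D1 D2) has_real_derivative re_eig' mu D1 D2) (at mu within {mu0 - \<delta>..mu0 + \<delta>})"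
      using deriv[OF mu] by (rule has_field_derivative_at_within)
    show "0 < re_eig' mu D1 D2" using fast[OF mu] \<open>0 < c\<close> by linarith
  qed (rule zero)
qed

section \<open>The Hopf point\<close>

context
  fixes mu0 :: real
  assumes muc1_less: "muc1 f1 f2 D g1 g2 D D < mu0"
    and A_zero: "Afun f1 f2 df1 df2 D g1 g2 mu0 = 0"
    and hyp_A: "df2 (lamZ f2 g2 D) < D / (g2 * lamZ f2 g2 D)"
begin

lemma mu0_pos: "0 < mu0"
  using muc1_D_pos muc1_less by linarith

lemma Nst_base_pos: "0 < Nst mu0 D"
  using Nst(1)[OF mu0_pos Pst_D(1)] .

lemma A_zero_eq: "Zst mu0 D D * (D / (g2 * Pst D) - df2 (Pst D)) = Pst D * df1 (Nst mu0 D)"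
  using A_zero unfolding Afun_def Zeq_eq_Zst Neq_eq_Nst Pst_def by simp

lemma Zst_base_pos: "0 < Zst mu0 D D"
proof -
  have "0 < Pst D * df1 (Nst mu0 D)" using Pst_D(1) Nst_base_pos df1_pos by simp
  moreover have "0 < D / (g2 * Pst D) - df2 (Pst D)" using hyp_A unfolding Pst_def by simp
  ultimately show ?thesis using A_zero_eq zero_less_mult_pos2 by metis
qed

lemma jac_entries_base:
  "j11 mu0 D D < 0" "j12 mu0 D D < 0" "0 < j21 mu0 D D" "j23 mu0 D D < 0" "0 < j32 mu0 D D"
proof -
  have df1: "0 < df1 (Nst mu0 D)" and f1: "0 < f1 (Nst mu0 D)"
    using df1_pos Nst_base_pos strict_mono_onD[OF f1_strict_mono, of 0 "Nst mu0 D"] f1_0 by auto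
  have "0 < Pst D * df1 (Nst mu0 D)" using Pst_D(1) df1 by simp
  thus "j11 mu0 D D < 0" unfolding j11_def using D_pos by linarith
  show "j12 mu0 D D < 0" "0 < j21 mu0 D D" "j23 mu0 D D < 0" "0 < j32 mu0 D D"
    unfolding j12_def j21_def j23_def j32_def
    using f1 df1 g1_pos g2_pos D_pos Pst_D Zst_base_pos df2_pos by simp_all
qed

lemma c2_base: "c2 mu0 D D = D"
proof -
  have "Zst mu0 D D * (D / (g2 * Pst D)) = g1 * f1 (Nst mu0 D) - D"
    unfolding Zst_def using D_pos g2_pos Pst_D(1) by (simp add: field_simps)
  thus ?thesis using A_zero_eq unfolding c2_def j11_def j22_def by (simp add: algebra_simps)
qed

lemma char_coeffs_base:
  "c0 mu0 D D = c1 mu0 D D * D" "0 < c0 mu0 D D" "0 < c1 mu0 D D"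
proof -
  show c0: "c0 mu0 D D = c1 mu0 D D * D"
    using cubic_minus_D[OF mu0_pos] unfolding c2_base cubic_def by (simp add: power2_eq_square power3_eq_cube)
  show "0 < c0 mu0 D D" unfolding c0_def using jac_entries_base by (simp add: mult_neg_neg)
  thus "0 < c1 mu0 D D" using c0 D_pos by (simp add: zero_less_mult_iff)
qed

lemma disc_base: "cubic_disc (c2 mu0 D D) (c1 mu0 D D) (c0 mu0 D D) < 0"
proof -
  have "cubic_disc (c2 mu0 D D) (c1 mu0 D D) (c0 mu0 D D) = - 4 * c1 mu0 D D * (c1 mu0 D D + D^2)^2"
    unfolding c2_base char_coeffs_base(1) cubic_disc_def by (simp add: power2_eq_square power3_eq_cube algebra_simps)
  moreover have "0 < c1 mu0 D D + D^2" using char_coeffs_base(3) by (simp add: add_pos_nonneg)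
  ultimately show ?thesis using char_coeffs_base(3) by (simp add: mult_pos_pos zero_less_mult_iff)
qed

lemma real_eig_base: "real_eig mu0 D D = - D"
  unfolding real_eig_def using cubic_real_root_eq[OF cubic_minus_D[OF mu0_pos] disc_base] .

lemma re_eig_base: "re_eig mu0 D D = 0"
  unfolding re_eig_def real_eig_base c2_base by simp

lemma real_eig'_base: "real_eig' mu0 D D = 0"
proof -
  have "c2' mu0 D D * D^2 - c1' mu0 D D * D + c0' mu0 D D = 0"
    unfolding c2'_def c1'_def c0'_def j11'_def j12'_def j21'_def j22'_def j32'_def Zst'_def
      j11_def j12_def j21_def j22_def j23_def j32_def Zst_def Pst_D(2)
    using D_pos g2_pos by (simp add: field_simps power2_eq_square)
  thus ?thesis unfolding real_eig'_def real_eig_base by (simp add: power2_eq_square)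
qed

text \<open>Transversality: \<open>c2'\<close> at the Hopf point is \<open>Nst'\<close> times
  \<open>Pst f1''(N) - g1 f1'(N) (D - g2 Pst f2'(Pst)) / D\<close>, negative by the two sign hypotheses.\<close>

lemma re_eig'_base_pos:
  assumes ddf1_neg: "ddf1 (Nst mu0 D) < 0"
  shows "0 < re_eig' mu0 D D"
proof -
  have "c2' mu0 D D = Nst' mu0 D * (Pst D * ddf1 (Nst mu0 D)
      - g1 * df1 (Nst mu0 D) * (D - g2 * Pst D * df2 (Pst D)) / D)"
    unfolding c2'_def j11'_def j22'_def Zst'_def using D_pos by (simp add: field_simps)
  moreover have "0 < Nst' mu0 D"
    unfolding Nst'_def using D_pos Pst_D(1) df1_pos Nst_base_pos by (simp add: add_pos_pos)
  moreover have "g2 * Pst D * df2 (Pst D) < D"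
    using hyp_A Pst_D(1) g2_pos unfolding Pst_def by (simp add: field_simps)
  hence "0 < g1 * df1 (Nst mu0 D) * (D - g2 * Pst D * df2 (Pst D)) / D"
    using g1_pos df1_pos Nst_base_pos D_pos by simp
  moreover have "Pst D * ddf1 (Nst mu0 D) < 0" using Pst_D(1) ddf1_neg by (simp add: mult_pos_neg)
  ultimately have "c2' mu0 D D < 0" by (simp add: mult_pos_neg)
  thus ?thesis unfolding re_eig'_def real_eig'_base by simp
qed

lemma tendsto_base_coordinates:
  "((\<lambda>y. fst y) \<longlongrightarrow> mu0) (nhds (mu0, D, D))"
  "((\<lambda>y. fst (snd y)) \<longlongrightarrow> D) (nhds (mu0, D, D))"
  "((\<lambda>y. snd (snd y)) \<longlongrightarrow> D) (nhds (mu0, D, D))"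
  using tendsto_fst[OF filterlim_ident] tendsto_fst[OF tendsto_snd[OF filterlim_ident]]
    tendsto_snd[OF tendsto_snd[OF filterlim_ident]]
  by (auto simp: nhds_def)

lemmas tendsto_near_base = tendsto_base_coordinates mu0_pos

lemma eventually_admissible:
  "eventually (\<lambda>y. admissible (fst y) (fst (snd y)) (snd (snd y))) (nhds (mu0, D, D))"
proof -
  note coeffs = tendsto_char_coeffs[OF tendsto_near_base]
    and entries = tendsto_jac_entries[OF tendsto_near_base]
  have "eventually (\<lambda>y. muc1 f1 f2 D g1 g2 (fst (snd y)) (snd (snd y)) < fst y) (nhds (mu0, D, D))"
    using order_tendstoD(1)[OF tendsto_diff[OF tendsto_base_coordinates(1) tendsto_muc1[OF tendsto_near_base]],
      of 0] muc1_less by simp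
  moreover have "eventually (\<lambda>y. 0 < fst y) (nhds (mu0, D, D))"
    using order_tendstoD(1)[OF tendsto_base_coordinates(1) mu0_pos] .
  moreover note eventually_Pst[OF tendsto_near_base]
  moreover have "eventually (\<lambda>y. 0 < snd (snd y)) (nhds (mu0, D, D))"
    using order_tendstoD(1)[OF tendsto_base_coordinates(3) D_pos] .
  moreover have "eventually (\<lambda>y. j11 (fst y) (fst (snd y)) (snd (snd y)) \<noteq> 0) (nhds (mu0, D, D))"
    "eventually (\<lambda>y. j12 (fst y) (fst (snd y)) (snd (snd y)) \<noteq> 0) (nhds (mu0, D, D))"
    "eventually (\<lambda>y. j21 (fst y) (fst (snd y)) (snd (snd y)) \<noteq> 0) (nhds (mu0, D, D))"
    "eventually (\<lambda>y. j23 (fst y) (fst (snd y)) (snd (snd y)) \<noteq> 0) (nhds (mu0, D, D))"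
    "eventually (\<lambda>y. j32 (fst y) (fst (snd y)) (snd (snd y)) \<noteq> 0) (nhds (mu0, D, D))"
    using tendsto_imp_eventually_ne[OF entries(1)] tendsto_imp_eventually_ne[OF entries(2)]
      tendsto_imp_eventually_ne[OF entries(3)] tendsto_imp_eventually_ne[OF entries(4)]
      tendsto_imp_eventually_ne[OF entries(5)] jac_entries_base by auto
  moreover have "eventually (\<lambda>y. cubic_disc (c2 (fst y) (fst (snd y)) (snd (snd y)))
      (c1 (fst y) (fst (snd y)) (snd (snd y))) (c0 (fst y) (fst (snd y)) (snd (snd y))) < 0) (nhds (mu0, D, D))"
    using order_tendstoD(2)[OF tendsto_cubic_disc[OF coeffs] disc_base] .
  moreover have "eventually (\<lambda>y. 0 < c0 (fst y) (fst (snd y)) (snd (snd y))) (nhds (mu0, D, D))"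
    using order_tendstoD(1)[OF coeffs(3) char_coeffs_base(2)] .
  ultimately show ?thesis unfolding admissible_def by eventually_elim auto
qed

lemma eventually_nhds_base_box:
  assumes "eventually (\<lambda>y. P (fst y) (fst (snd y)) (snd (snd y))) (nhds (mu0, D, D))"
  obtains e where "0 < e" "\<And>mu d1 d2. \<bar>mu - mu0\<bar> \<le> e \<Longrightarrow> dist (d1, d2) (D, D) < e \<Longrightarrow> P mu d1 d2"
  using eventually_nhds_pair_box[OF assms] by (metis fst_conv snd_conv)

lemma hopf_eigenvalues:
  "\<exists>\<delta>>0. \<exists>\<rho>>0. \<forall>D1 D2. 0 < D1 \<longrightarrow> 0 < D2 \<longrightarrow> dist (D1, D2) (D, D) < \<rho> \<longrightarrow>
     (\<forall>mu\<in>{mu0 - \<delta>..mu0 + \<delta>}.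
        muc1 f1 f2 D g1 g2 D1 D2 < mu \<and>
        (\<exists>a r \<omega>. r < 0 \<and> \<omega> \<noteq> 0 \<and>
           eigenvalues (jac f1 f2 df1 df2 D g1 g2 D1 D2 (E2 f1 f2 D g1 g2 mu D1 D2))
             = {complex_of_real r, Complex a \<omega>, Complex a (- \<omega>)}))"
proof -
  obtain e where "0 < e"
    and adm: "\<And>mu d1 d2. \<bar>mu - mu0\<bar> \<le> e \<Longrightarrow> dist (d1, d2) (D, D) < e \<Longrightarrow> admissible mu d1 d2"
    using eventually_nhds_base_box[OF eventually_admissible] by blast
  have "admissible mu D1 D2" if "dist (D1, D2) (D, D) < e" "mu \<in> {mu0 - e..mu0 + e}" for D1 D2 mu
    using that by (intro adm) (auto simp: abs_le_iff)
  hence "muc1 f1 f2 D g1 g2 D1 D2 < mu \<and> (\<exists>a r \<omega>. r < 0 \<and> \<omega> \<noteq> 0 \<and>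
      eigenvalues (jac f1 f2 df1 df2 D g1 g2 D1 D2 (E2 f1 f2 D g1 g2 mu D1 D2))
        = {complex_of_real r, Complex a \<omega>, Complex a (- \<omega>)})"
    if "dist (D1, D2) (D, D) < e" "mu \<in> {mu0 - e..mu0 + e}" for D1 D2 mu
    using that admissible_eigenvalues unfolding admissible_def by blast
  with \<open>0 < e\<close> show ?thesis by blast
qed

lemma hopf_crossing:
  assumes "ddf1 (Neq f1 f2 D g1 g2 mu0 D D) < 0"
  shows "\<exists>\<delta>>0. \<exists>\<rho>>0. \<forall>D1 D2. 0 < D1 \<longrightarrow> 0 < D2 \<longrightarrow> dist (D1, D2) (D, D) < \<rho> \<longrightarrow>
    (\<forall>mu\<in>{mu0 - \<delta>..mu0 + \<delta>}. muc1 f1 f2 D g1 g2 D1 D2 < mu) \<and>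
    (\<exists>a a' :: real \<Rightarrow> real.
       (\<forall>mu\<in>{mu0 - \<delta>..mu0 + \<delta>}.
          (\<exists>r \<omega>. r < 0 \<and> \<omega> \<noteq> 0 \<and>
             eigenvalues (jac f1 f2 df1 df2 D g1 g2 D1 D2 (E2 f1 f2 D g1 g2 mu D1 D2))
               = {complex_of_real r, Complex (a mu) \<omega>, Complex (a mu) (- \<omega>)}) \<and>
          (a has_real_derivative a' mu) (at mu within {mu0 - \<delta>..mu0 + \<delta>}) \<and>
          0 < a' mu) \<and>
       (\<exists>mus\<in>{mu0 - \<delta><..<mu0 + \<delta>}. a mus = 0))"
proof -
  define c where "c = re_eig' mu0 D D / 2"
  have c: "0 < c" "c < re_eig' mu0 D D"
    using re_eig'_base_pos assms unfolding c_def Neq_eq_Nst by simp_all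
  have "eventually (\<lambda>y. admissible (fst y) (fst (snd y)) (snd (snd y)) \<and>
      c < re_eig' (fst y) (fst (snd y)) (snd (snd y))) (nhds (mu0, D, D))"
    using eventually_admissible order_tendstoD(1)[OF tendsto_re_eig'[OF tendsto_near_base disc_base] c(2)]
    by (rule eventually_conj)
  from eventually_nhds_base_box[OF this] obtain \<delta> where "0 < \<delta>" and \<delta>: "\<And>mu d1 d2.
      \<bar>mu - mu0\<bar> \<le> \<delta> \<Longrightarrow> dist (d1, d2) (D, D) < \<delta> \<Longrightarrow> admissible mu d1 d2 \<and> c < re_eig' mu d1 d2"
    by blast
  have "eventually (\<lambda>y. \<bar>re_eig (fst y) (fst (snd y)) (snd (snd y))\<bar> < c * \<delta>) (nhds (mu0, D, D))"
    using tendsto_re_eig[OF tendsto_near_base disc_base] \<open>0 < \<delta>\<close> c(1)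
    unfolding re_eig_base tendsto_iff dist_real_def by simp
  from eventually_nhds_base_box[OF this] obtain \<epsilon> where "0 < \<epsilon>" and \<epsilon>: "\<And>mu d1 d2.
      \<bar>mu - mu0\<bar> \<le> \<epsilon> \<Longrightarrow> dist (d1, d2) (D, D) < \<epsilon> \<Longrightarrow> \<bar>re_eig mu d1 d2\<bar> < c * \<delta>"
    by blast
  show ?thesis
  proof (rule exI[of _ \<delta>], rule conjI[OF \<open>0 < \<delta>\<close>], rule exI[of _ "min \<delta> \<epsilon>"],
      rule conjI, use \<open>0 < \<delta>\<close> \<open>0 < \<epsilon>\<close> in simp, intro allI impI re_eig_crosses_zero[OF \<open>0 < \<delta>\<close> c(1)])
    fix D1 D2 assume dist: "dist (D1, D2) (D, D) < min \<delta> \<epsilon>"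
    show "\<bar>re_eig mu0 D1 D2\<bar> < c * \<delta>" using \<epsilon>[of mu0 D1 D2] \<open>0 < \<epsilon>\<close> dist by simp
    fix mu assume "mu \<in> {mu0 - \<delta>..mu0 + \<delta>}"
    thus "admissible mu D1 D2" "c < re_eig' mu D1 D2" using \<delta>[of mu D1 D2] dist by (simp_all add: abs_le_iff)
  qed
qed

end

end

theorem theorem3p8:
  fixes f1 f2 df1 ddf1 dddf1 df2 ddf2 :: "real \<Rightarrow> real"
    and D g1 g2 muc2 :: real
  assumes D_pos: "0 < D" and g1_pos: "0 < g1" and g2_pos: "0 < g2"
    and f1_nonneg: "\<forall>x\<ge>0. 0 \<le> f1 x" and f2_nonneg: "\<forall>x\<ge>0. 0 \<le> f2 x"
    and f1_bdd: "bounded (f1 ` {0..})" and f2_bdd: "bounded (f2 ` {0..})"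
    and f1_0: "f1 0 = 0" and f2_0: "f2 0 = 0"
    and f1_deriv: "\<forall>x\<ge>0. (f1 has_real_derivative df1 x) (at x within {0..})"
    and f2_deriv: "\<forall>x\<ge>0. (f2 has_real_derivative df2 x) (at x within {0..})"
    and df1_cont: "continuous_on {0..} df1" and df2_cont: "continuous_on {0..} df2"
    and df1_pos: "\<forall>x\<ge>0. 0 < df1 x" and df2_pos: "\<forall>x\<ge>0. 0 < df2 x"
    and lim_cond: "\<exists>e>0. \<forall>d. \<bar>d - D\<bar> < e \<longrightarrow>
                      d / g1 < Lim at_top f1 \<and> d / g2 < Lim at_top f2"
    and f1_C3: "\<forall>x\<ge>0. (df1 has_real_derivative ddf1 x) (at x within {0..})
                 \<and> (ddf1 has_real_derivative dddf1 x) (at x within {0..})"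
    and dddf1_cont: "continuous_on {0..} dddf1"
    and f2_C2: "\<forall>x\<ge>0. (df2 has_real_derivative ddf2 x) (at x within {0..})"
    and ddf2_cont: "continuous_on {0..} ddf2"
    and hyp_A: "D / (g2 * lamZ f2 g2 D) > df2 (lamZ f2 g2 D)"
    and muc2_gt: "muc2 > muc1 f1 f2 D g1 g2 D D"
    and A_zero: "Afun f1 f2 df1 df2 D g1 g2 muc2 = 0"
  shows
    "(\<exists>\<delta>>0. \<exists>\<rho>>0. \<forall>D1 D2. 0 < D1 \<longrightarrow> 0 < D2 \<longrightarrow> dist (D1, D2) (D, D) < \<rho> \<longrightarrow>
        (\<forall>mu\<in>{muc2 - \<delta>..muc2 + \<delta>}.
           muc1 f1 f2 D g1 g2 D1 D2 < mu \<and>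
           (\<exists>a r \<omega>. r < 0 \<and> \<omega> \<noteq> 0 \<and>
              eigenvalues (jac f1 f2 df1 df2 D g1 g2 D1 D2 (E2 f1 f2 D g1 g2 mu D1 D2))
                = {complex_of_real r, Complex a \<omega>, Complex a (- \<omega>)})))
   \<and> (ddf1 (Neq f1 f2 D g1 g2 muc2 D D) < 0 \<longrightarrow>
      (\<exists>\<delta>>0. \<exists>\<rho>>0. \<forall>D1 D2. 0 < D1 \<longrightarrow> 0 < D2 \<longrightarrow> dist (D1, D2) (D, D) < \<rho> \<longrightarrow>
        (\<forall>mu\<in>{muc2 - \<delta>..muc2 + \<delta>}. muc1 f1 f2 D g1 g2 D1 D2 < mu) \<and>
        (\<exists>a a' :: real \<Rightarrow> real.
           (\<forall>mu\<in>{muc2 - \<delta>..muc2 + \<delta>}.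
              (\<exists>r \<omega>. r < 0 \<and> \<omega> \<noteq> 0 \<and>
                 eigenvalues (jac f1 f2 df1 df2 D g1 g2 D1 D2 (E2 f1 f2 D g1 g2 mu D1 D2))
                   = {complex_of_real r, Complex (a mu) \<omega>, Complex (a mu) (- \<omega>)}) \<and>
              (a has_real_derivative a' mu) (at mu within {muc2 - \<delta>..muc2 + \<delta>}) \<and>
              0 < a' mu) \<and>
           (\<exists>mus\<in>{muc2 - \<delta><..<muc2 + \<delta>}. a mus = 0))))"
proof -
  have "D / g1 < Lim at_top f1" "D / g2 < Lim at_top f2" using lim_cond by force+
  moreover have "\<forall>x>0. isCont ddf1 x"
    using f1_C3 has_real_derivative_at_pos DERIV_isCont by (metis less_imp_le)
  ultimately interpret npz_model f1 f2 df1 ddf1 df2 D g1 g2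
    using D_pos g1_pos g2_pos f1_bdd f2_bdd f1_0 f2_0 f1_deriv f2_deriv df2_cont df1_pos df2_pos f1_C3
    by unfold_locales auto
  show ?thesis
    using hopf_eigenvalues[OF muc2_gt A_zero hyp_A] hopf_crossing[OF muc2_gt A_zero hyp_A] by blast
qed

end
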